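(* Let $|\cdot|$ be a norm on $\mathbb{R}^d$ and let $\mathbf{X}=\{\mathbf{X}_j,j\in\mathbb{Z}\}$ be a strictly stationary, regularly varying $\mathbb{R}^d$-valued time series with tail process $\mathbf{Y}$. Let $u_n>0$ and positive integers $r_n$ satisfy $u_n\to\infty$, $r_n\to\infty$, $nw_n\to\infty$, $r_n/n\to0$, $r_nw_n\to0$, where $w_n=\mathbb{P}(|\mathbf{X}_0|>u_n)$. Assume $\mathcal{AC}(r_n,u_n)$ holds and let $\gamma>0$. Then $$\lim_{n\to\infty}\frac{\mathbb{E}[t(1)^\gamma\mathbf{1}_{A_1}]}{r_n^{\gamma+1}w_n}=\lim_{n\to\infty}\frac{\mathbb{E}[(r_n-t(1))^\gamma\mathbf{1}_{A_1}]}{r_n^{\gamma+1}w_n}=\frac{\vartheta}{\gamma+1},$$ and the same limits hold with $t(1)$ replaced by $t(N_1)$.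
   Context: Tail process: for all $i\le j$ the law of $x^{-1}(\mathbf{X}_i,\dots,\mathbf{X}_j)$ given $|\mathbf{X}_0|>x$ converges weakly to that of $(\mathbf{Y}_i,\dots,\mathbf{Y}_j)$ as $x\to\infty$. Notation: $\mathbf{x}^*_{i,j}=\sup_{i\le l\le j}|\mathbf{x}_l|$. $\mathcal{AC}(r_n,u_n)$: for all $s,t>0$, $\lim_{\ell\to\infty}\limsup_{n\to\infty}\mathbb{P}(\max_{\ell\le|j|\le r_n}|\mathbf{X}_j|>u_ns\mid|\mathbf{X}_0|>u_nt)=0$. $\vartheta=\mathbb{P}(\mathbf{Y}^*_{-\infty,-1}\le1)$. $A_1=\{\mathbf{X}^*_{1,r_n}>u_n\}$; on $A_1$, $t(1)$ and $t(N_1)$ are the smallest and largest $i\in\{1,\dots,r_n\}$ with $|\mathbf{X}_i|>u_n$. *)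

theory Defs
  imports "HOL-Probability.Probability"
begin

definition is_norm :: "('v::real_vector \<Rightarrow> real) \<Rightarrow> bool" where
  "is_norm nrm \<longleftrightarrow>
     (\<forall>x. 0 \<le> nrm x) \<and> (\<forall>x. nrm x = 0 \<longleftrightarrow> x = 0) \<and>
     (\<forall>c x. nrm (c *\<^sub>R x) = \<bar>c\<bar> * nrm x) \<and> (\<forall>x y. nrm (x + y) \<le> nrm x + nrm y)"

definition cond_prob :: "'a measure \<Rightarrow> 'a set \<Rightarrow> 'a set \<Rightarrow> real" where
  "cond_prob M A B = measure M (A \<inter> B) / measure M B"

definition random_series :: "'a measure \<Rightarrow> ('a \<Rightarrow> int \<Rightarrow> 'v::topological_space) \<Rightarrow> bool" where
  "random_series M X \<longleftrightarrow> prob_space M \<and> (\<forall>j. (\<lambda>\<omega>. X \<omega> j) \<in> borel_measurable M)"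

definition strictly_stationary :: "'a measure \<Rightarrow> ('a \<Rightarrow> int \<Rightarrow> 'v::topological_space) \<Rightarrow> bool" where
  "strictly_stationary M X \<longleftrightarrow>
     (\<forall>h::int. distr M (Pi\<^sub>M UNIV (\<lambda>_. borel)) (\<lambda>\<omega> j. X \<omega> (j + h))
              = distr M (Pi\<^sub>M UNIV (\<lambda>_. borel)) X)"

text \<open>Tail process: for all i \<le> j, the law of x^{-1}(X_i,...,X_j) given nrm X_0 > x converges
  weakly to that of (Y_i,...,Y_j) as x \<rightarrow> \<infinity>.  Weak convergence is expressed through all bounded
  continuous test functions of the coordinates i..j (continuity w.r.t. the product topology).\<close>
definition is_tail_process ::
  "('v::real_normed_vector \<Rightarrow> real) \<Rightarrow> 'a measure \<Rightarrow> ('a \<Rightarrow> int \<Rightarrow> 'v)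
     \<Rightarrow> 'b measure \<Rightarrow> ('b \<Rightarrow> int \<Rightarrow> 'v) \<Rightarrow> bool" where
  "is_tail_process nrm M X N Y \<longleftrightarrow>
     random_series N Y \<and>
     (\<forall>i j. i \<le> j \<longrightarrow>
       (\<forall>g :: (int \<Rightarrow> 'v) \<Rightarrow> real.
          bounded (range g) \<longrightarrow> continuous_on UNIV g \<longrightarrow>
          (\<forall>z z'. (\<forall>l\<in>{i..j}. z l = z' l) \<longrightarrow> g z = g z') \<longrightarrow>
          ((\<lambda>x::real. (\<integral>\<omega>. indicator {\<omega>\<in>space M. nrm (X \<omega> 0) > x} \<omega>
                                 * g (\<lambda>l. inverse x *\<^sub>R X \<omega> l) \<partial>M)
                       / measure M {\<omega>\<in>space M. nrm (X \<omega> 0) > x})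
            \<longlongrightarrow> (\<integral>\<omega>. g (Y \<omega>) \<partial>N)) at_top))"

text \<open>Regular variation of the series: the tail of nrm X_0 is regularly varying with positive index
  and a tail process exists (equivalently, all finite-dimensional vectors are multivariate
  regularly varying, Basrak and Segers 2009).\<close>
definition regularly_varying_series ::
  "('v::real_normed_vector \<Rightarrow> real) \<Rightarrow> 'a measure \<Rightarrow> ('a \<Rightarrow> int \<Rightarrow> 'v) \<Rightarrow> bool" where
  "regularly_varying_series nrm M X \<longleftrightarrow>
     (\<forall>x. measure M {\<omega>\<in>space M. nrm (X \<omega> 0) > x} > 0) \<and>
     (\<exists>\<alpha>>0. \<forall>y>0. ((\<lambda>x. measure M {\<omega>\<in>space M. nrm (X \<omega> 0) > x * y}
                         / measure M {\<omega>\<in>space M. nrm (X \<omega> 0) > x}) \<longlongrightarrow> y powr (-\<alpha>)) at_top) \<and>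
     (\<exists>(N :: (int \<Rightarrow> 'v) measure) Y. is_tail_process nrm M X N Y)"

definition AC_cond ::
  "('v \<Rightarrow> real) \<Rightarrow> 'a measure \<Rightarrow> ('a \<Rightarrow> int \<Rightarrow> 'v) \<Rightarrow> (nat \<Rightarrow> nat) \<Rightarrow> (nat \<Rightarrow> real) \<Rightarrow> bool" where
  "AC_cond nrm M X r u \<longleftrightarrow>
     (\<forall>s>0. \<forall>t>0.
       ((\<lambda>l::nat. limsup (\<lambda>n. ereal (cond_prob M
            {\<omega>\<in>space M. \<exists>j::int. int l \<le> \<bar>j\<bar> \<and> \<bar>j\<bar> \<le> int (r n) \<and> nrm (X \<omega> j) > u n * s}
            {\<omega>\<in>space M. nrm (X \<omega> 0) > u n * t})))
        \<longlongrightarrow> 0) sequentially)"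

definition theta_tail :: "('v \<Rightarrow> real) \<Rightarrow> 'b measure \<Rightarrow> ('b \<Rightarrow> int \<Rightarrow> 'v) \<Rightarrow> real" where
  "theta_tail nrm N Y = measure N {\<omega>\<in>space N. \<forall>j::int. j \<le> -1 \<longrightarrow> nrm (Y \<omega> j) \<le> 1}"

definition A1 :: "('v \<Rightarrow> real) \<Rightarrow> 'a measure \<Rightarrow> ('a \<Rightarrow> int \<Rightarrow> 'v) \<Rightarrow> nat \<Rightarrow> real \<Rightarrow> 'a set" where
  "A1 nrm M X rn un = {\<omega>\<in>space M. \<exists>i::int. 1 \<le> i \<and> i \<le> int rn \<and> nrm (X \<omega> i) > un}"

text \<open>t(1) and t(N_1): first and last exceedance times in {1..r_n} (meaningful on A_1).\<close>
definition t_first :: "('v \<Rightarrow> real) \<Rightarrow> ('a \<Rightarrow> int \<Rightarrow> 'v) \<Rightarrow> nat \<Rightarrow> real \<Rightarrow> 'a \<Rightarrow> int" where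
  "t_first nrm X rn un \<omega> = (LEAST i::int. 1 \<le> i \<and> i \<le> int rn \<and> nrm (X \<omega> i) > un)"

definition t_last :: "('v \<Rightarrow> real) \<Rightarrow> ('a \<Rightarrow> int \<Rightarrow> 'v) \<Rightarrow> nat \<Rightarrow> real \<Rightarrow> 'a \<Rightarrow> int" where
  "t_last nrm X rn un \<omega> = (GREATEST i::int. 1 \<le> i \<and> i \<le> int rn \<and> nrm (X \<omega> i) > un)"

end

theory Submission
  imports Defs
begin

(*
  By stationarity, the first exceedance of u_n in {1..r_n} occurs at time m + 1 with the probability
  of the quiet past {|X_0| > u_n, |X_j| <= u_n for -m <= j <= -1}, and the last one at time r_n - m
  with the probability of the corresponding quiet future {1..m}. Each expectation is thus a weighted
  sum over the lag m of the conditional probabilities q_n(m) of a quiet window given |X_0| > u_n.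
  For a fixed past window the tail process gives q_n(m) -> P(|Y_j| <= 1 for -m <= j <= -1), which
  tends to theta as m grows, and anticlustering makes q_n(m) nearly constant for l <= m <= r_n; so
  q_n(m) is uniformly close to theta at large lags. The future ratios are nearly constant in m too,
  and both families sum to P(A_1) / w_n, so their common average pins them to theta as well. The
  weights m^gamma have total mass ~ r_n^(gamma + 1) / (gamma + 1), whence the limit theta / (gamma + 1).
*)

section \<open>Power sums\<close>

lemma powr_increment_bounds:
  fixes a g :: real
  assumes "0 \<le> a" "0 < g"
  shows "(g + 1) * a powr g \<le> (a + 1) powr (g + 1) - a powr (g + 1)"
    and "(a + 1) powr (g + 1) - a powr (g + 1) \<le> (g + 1) * (a + 1) powr g"
proof -
  have "continuous_on {a..a + 1} (\<lambda>x. x powr (g + 1))"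
    using assms by (intro continuous_on_powr') (auto intro: continuous_intros)
  moreover have "(\<lambda>x. x powr (g + 1)) differentiable at x" if "a < x" for x
    using has_real_derivative_powr[of x "g + 1"] that assms real_differentiable_def by force
  ultimately obtain l z where z: "a < z" "z < a + 1"
      and l: "((\<lambda>x. x powr (g + 1)) has_real_derivative l) (at z)"
      and mvt: "(a + 1) powr (g + 1) - a powr (g + 1) = (a + 1 - a) * l"
    using MVT[of a "a + 1" "\<lambda>x. x powr (g + 1)"] by auto
  have "l = (g + 1) * z powr g"
    using DERIV_unique[OF l has_real_derivative_powr[of z "g + 1"]] z assms by simp
  moreover have "a powr g \<le> z powr g" "z powr g \<le> (a + 1) powr g"
    using z assms by (auto intro: powr_mono2)
  ultimately show "(g + 1) * a powr g \<le> (a + 1) powr (g + 1) - a powr (g + 1)"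
    and "(a + 1) powr (g + 1) - a powr (g + 1) \<le> (g + 1) * (a + 1) powr g"
    using mvt assms by auto
qed

lemma sum_powr_bounds:
  fixes g :: real
  assumes "0 < g"
  shows "real N powr (g + 1) \<le> (g + 1) * (\<Sum>j<N. real (j + 1) powr g)"
    and "(g + 1) * (\<Sum>j<N. real (j + 1) powr g) \<le> real (N + 1) powr (g + 1)"
proof -
  have "real N powr (g + 1) = (\<Sum>j<N. real (Suc j) powr (g + 1) - real j powr (g + 1))"
    using assms by (subst sum_lessThan_telescope) simp
  also have "\<dots> \<le> (\<Sum>j<N. (g + 1) * real (j + 1) powr g)"
    by (intro sum_mono) (use powr_increment_bounds(2)[of "real _" g] assms in \<open>simp add: add.commute\<close>)
  finally show "real N powr (g + 1) \<le> (g + 1) * (\<Sum>j<N. real (j + 1) powr g)"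
    by (simp add: sum_distrib_left)
  have "(g + 1) * (\<Sum>j<N. real (j + 1) powr g) = (\<Sum>j<N. (g + 1) * real (j + 1) powr g)"
    by (simp add: sum_distrib_left)
  also have "\<dots> \<le> (\<Sum>j<N. real (Suc (j + 1)) powr (g + 1) - real (j + 1) powr (g + 1))"
    by (intro sum_mono) (use powr_increment_bounds(1)[of "real (_ + 1)" g] assms in \<open>simp add: add.commute\<close>)
  also have "\<dots> = real (N + 1) powr (g + 1) - 1"
    using sum_lessThan_telescope[of "\<lambda>j. real (j + 1) powr (g + 1)" N] by simp
  finally show "(g + 1) * (\<Sum>j<N. real (j + 1) powr g) \<le> real (N + 1) powr (g + 1)"
    by simp
qed

lemma sum_powr_Suc_asymp:
  fixes g :: real
  assumes "0 < g"
  shows "(\<lambda>N. (\<Sum>j<N. real (j + 1) powr g) / real N powr (g + 1)) \<longlonglongrightarrow> 1 / (g + 1)"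
proof (rule tendsto_sandwich)
  show "\<forall>\<^sub>F N in sequentially. 1 / (g + 1) \<le> (\<Sum>j<N. real (j + 1) powr g) / real N powr (g + 1)"
    using eventually_gt_at_top[of 0]
    by eventually_elim (use sum_powr_bounds(1)[OF assms] assms in \<open>simp add: field_simps\<close>)
  show "\<forall>\<^sub>F N in sequentially. (\<Sum>j<N. real (j + 1) powr g) / real N powr (g + 1)
      \<le> (1 + 1 / real N) powr (g + 1) / (g + 1)"
    using eventually_gt_at_top[of 0]
  proof eventually_elim
    case (elim N)
    then have "(1 + 1 / real N) powr (g + 1) = real (N + 1) powr (g + 1) / real N powr (g + 1)"
      by (simp add: powr_divide field_simps)
    then show ?case
      using sum_powr_bounds(2)[OF assms, of N] assms elim by (simp add: field_simps)
  qed
  have "(\<lambda>N. (1 + 1 / real N) powr (g + 1) / (g + 1)) \<longlonglongrightarrow> (1 + 0) powr (g + 1) / (g + 1)"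
    using assms by (intro tendsto_intros lim_1_over_n) auto
  then show "(\<lambda>N. (1 + 1 / real N) powr (g + 1) / (g + 1)) \<longlonglongrightarrow> 1 / (g + 1)"
    by simp
qed simp

lemma sum_powr_asymp:
  fixes g :: real
  assumes "0 < g"
  shows "(\<lambda>N. (\<Sum>j<N. real j powr g) / real N powr (g + 1)) \<longlonglongrightarrow> 1 / (g + 1)"
proof -
  have "(\<lambda>N. (\<Sum>j<N. real (j + 1) powr g) / real N powr (g + 1) - 1 / real N) \<longlonglongrightarrow> 1 / (g + 1) - 0"
    by (intro tendsto_diff sum_powr_Suc_asymp assms lim_1_over_n)
  moreover have "\<forall>\<^sub>F N in sequentially. (\<Sum>j<N. real (j + 1) powr g) / real N powr (g + 1) - 1 / real N
      = (\<Sum>j<N. real j powr g) / real N powr (g + 1)"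
    using eventually_gt_at_top[of 0]
  proof eventually_elim
    case (elim N)
    have "(\<Sum>j<N. real (j + 1) powr g) = (\<Sum>j<N. real j powr g) + real N powr g"
      by (induction N) simp_all
    moreover have "real N powr g / real N powr (g + 1) = 1 / real N"
      using elim by (simp add: powr_add)
    ultimately show ?case by (simp add: add_divide_distrib)
  qed
  ultimately show ?thesis
    by (simp add: Lim_transform_eventually)
qed

section \<open>Limits uniform in the lag\<close>

definition lag_uniform_limit :: "(nat \<Rightarrow> nat \<Rightarrow> real) \<Rightarrow> (nat \<Rightarrow> nat) \<Rightarrow> real \<Rightarrow> bool" where
  "lag_uniform_limit c R \<theta> \<longleftrightarrow>
     (\<forall>\<epsilon>>0. \<exists>l. \<forall>\<^sub>F n in sequentially. \<forall>m. l \<le> m \<longrightarrow> m < R n \<longrightarrow> \<bar>c n m - \<theta>\<bar> \<le> \<epsilon>)"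

definition lag_cauchy :: "(nat \<Rightarrow> nat \<Rightarrow> real) \<Rightarrow> (nat \<Rightarrow> nat) \<Rightarrow> bool" where
  "lag_cauchy c R \<longleftrightarrow>
     (\<forall>\<epsilon>>0. \<exists>l. \<forall>\<^sub>F n in sequentially. \<forall>m. l \<le> m \<longrightarrow> m < R n \<longrightarrow> \<bar>c n m - c n l\<bar> \<le> \<epsilon>)"

lemma lag_uniform_limitI:
  assumes cauchy: "lag_cauchy c R"
    and pointwise: "\<And>l. (\<lambda>n. c n l) \<longlonglongrightarrow> T l"
    and "T \<longlonglongrightarrow> \<theta>"
  shows "lag_uniform_limit c R \<theta>"
  unfolding lag_uniform_limit_def
proof (intro allI impI)
  fix \<epsilon> :: real
  assume "\<epsilon> > 0"
  then have \<epsilon>4: "\<epsilon> / 4 > 0" by simp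
  obtain l0 where l0: "\<forall>\<^sub>F n in sequentially. \<forall>m. l0 \<le> m \<longrightarrow> m < R n \<longrightarrow> \<bar>c n m - c n l0\<bar> \<le> \<epsilon> / 4"
    using cauchy \<epsilon>4 unfolding lag_cauchy_def by blast
  obtain l1 where l1: "\<And>l. l1 \<le> l \<Longrightarrow> \<bar>T l - \<theta>\<bar> < \<epsilon> / 4"
    using \<open>T \<longlonglongrightarrow> \<theta>\<close> \<epsilon>4 unfolding LIMSEQ_def dist_real_def by blast
  define l where "l = max l0 l1"
  have "\<forall>\<^sub>F n in sequentially. \<bar>c n l - T l\<bar> < \<epsilon> / 4"
    using pointwise[of l] \<epsilon>4 unfolding tendsto_iff dist_real_def by blast
  with l0 have "\<forall>\<^sub>F n in sequentially. \<forall>m. l \<le> m \<longrightarrow> m < R n \<longrightarrow> \<bar>c n m - \<theta>\<bar> \<le> \<epsilon>"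
  proof eventually_elim
    case (elim n)
    have "\<bar>c n m - \<theta>\<bar> \<le> \<epsilon>" if "l \<le> m" "m < R n" for m
    proof -
      have "l0 \<le> l" "l1 \<le> l" unfolding l_def by simp_all
      then have "\<bar>c n m - c n l0\<bar> \<le> \<epsilon> / 4" "\<bar>c n l - c n l0\<bar> \<le> \<epsilon> / 4" "\<bar>T l - \<theta>\<bar> < \<epsilon> / 4"
        using elim(1) l1 that by auto
      then show ?thesis using elim(2) by linarith
    qed
    then show ?case by blast
  qed
  then show "\<exists>l. \<forall>\<^sub>F n in sequentially. \<forall>m. l \<le> m \<longrightarrow> m < R n \<longrightarrow> \<bar>c n m - \<theta>\<bar> \<le> \<epsilon>"
    by blast
qed

lemma sum_abs_split_bound:
  fixes f q :: "nat \<Rightarrow> real"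
  assumes "\<And>m. m < R \<Longrightarrow> m < l \<Longrightarrow> \<bar>f m\<bar> \<le> P"
    and "\<And>m. m < R \<Longrightarrow> l \<le> m \<Longrightarrow> \<bar>f m\<bar> \<le> q m"
    and "\<And>m. 0 \<le> q m" and "0 \<le> P"
  shows "\<bar>\<Sum>m<R. f m\<bar> \<le> real l * P + (\<Sum>m<R. q m)"
proof -
  have "\<bar>\<Sum>m<R. f m\<bar> \<le> (\<Sum>m<R. (if m < l then P else 0) + q m)"
  proof (intro order_trans[OF sum_abs] sum_mono)
    fix m assume "m \<in> {..<R}"
    then show "\<bar>f m\<bar> \<le> (if m < l then P else 0) + q m"
      using assms(1-3)[of m] by (cases "m < l") (auto intro: add_increasing2)
  qed
  also have "\<dots> = real (card ({..<R} \<inter> {..<l})) * P + (\<Sum>m<R. q m)"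
    by (simp add: sum.distrib sum.If_cases Int_def)
  also have "\<dots> \<le> real l * P + (\<Sum>m<R. q m)"
    using card_mono[of "{..<l}" "{..<R} \<inter> {..<l}"] assms(4)
      by (intro add_right_mono mult_right_mono) auto
  finally show ?thesis .
qed

lemma lag_uniform_limit_weighted_sum:
  fixes w :: "nat \<Rightarrow> nat \<Rightarrow> real"
  assumes lim: "lag_uniform_limit c R \<theta>"
    and bounded: "\<And>n m. \<bar>c n m - \<theta>\<bar> \<le> C"
    and w_nonneg: "\<And>n m. 0 \<le> w n m"
    and w_le: "\<And>n m. m < R n \<Longrightarrow> w n m \<le> B n" and "B \<longlonglongrightarrow> 0"
    and total: "(\<lambda>n. \<Sum>m<R n. w n m) \<longlonglongrightarrow> S"
  shows "(\<lambda>n. \<Sum>m<R n. w n m * c n m) \<longlonglongrightarrow> \<theta> * S"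
proof -
  define E where "E n = (\<Sum>m<R n. w n m * (c n m - \<theta>))" for n
  have C: "0 \<le> C" using bounded[of 0 0] by linarith
  have small: "\<forall>\<^sub>F n in sequentially. \<bar>E n\<bar> \<le> \<epsilon> * (\<bar>S\<bar> + 2)" if "0 < \<epsilon>" for \<epsilon>
  proof -
    obtain l where "\<forall>\<^sub>F n in sequentially. \<forall>m. l \<le> m \<longrightarrow> m < R n \<longrightarrow> \<bar>c n m - \<theta>\<bar> \<le> \<epsilon>"
      using lim \<open>0 < \<epsilon>\<close> unfolding lag_uniform_limit_def by blast
    moreover have "\<forall>\<^sub>F n in sequentially. \<bar>(\<Sum>m<R n. w n m) - S\<bar> < 1"
      using total unfolding tendsto_iff dist_real_def by simp
    moreover have "(\<lambda>n. real l * C * B n) \<longlonglongrightarrow> 0"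
      using tendsto_mult_right_zero[OF \<open>B \<longlonglongrightarrow> 0\<close>] .
    then have "\<forall>\<^sub>F n in sequentially. \<bar>real l * C * B n\<bar> < \<epsilon>"
      using \<open>0 < \<epsilon>\<close> unfolding tendsto_iff dist_real_def by simp
    ultimately show ?thesis
    proof eventually_elim
      case (elim n)
      have "\<bar>E n\<bar> \<le> real l * (C * \<bar>B n\<bar>) + (\<Sum>m<R n. \<epsilon> * w n m)"
        unfolding E_def
      proof (rule sum_abs_split_bound)
        fix m assume "m < R n"
        then have "w n m \<le> \<bar>B n\<bar>" using w_le by force
        then show "\<bar>w n m * (c n m - \<theta>)\<bar> \<le> C * \<bar>B n\<bar>"
          using mult_mono[of "w n m" "\<bar>B n\<bar>" "\<bar>c n m - \<theta>\<bar>" C] w_nonneg[of n m] bounded[of n m]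
          by (simp add: abs_mult mult.commute)
      next
        fix m assume "m < R n" "l \<le> m"
        then have "\<bar>c n m - \<theta>\<bar> \<le> \<epsilon>" using elim(1) by blast
        then have "\<bar>c n m - \<theta>\<bar> * w n m \<le> \<epsilon> * w n m"
          by (rule mult_right_mono) (rule w_nonneg)
        then show "\<bar>w n m * (c n m - \<theta>)\<bar> \<le> \<epsilon> * w n m"
          using w_nonneg[of n m] by (simp add: abs_mult mult.commute)
      qed (use \<open>0 < \<epsilon>\<close> w_nonneg C in auto)
      also have "\<dots> = \<bar>real l * C * B n\<bar> + \<epsilon> * (\<Sum>m<R n. w n m)"
        using C by (simp add: sum_distrib_left abs_mult)
      also have "\<dots> \<le> \<epsilon> + \<epsilon> * (\<bar>S\<bar> + 1)"
        using elim(2,3) \<open>0 < \<epsilon>\<close> by (intro add_mono mult_left_mono) (auto simp: abs_less_iff)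
      finally show ?case by (simp add: algebra_simps)
    qed
  qed
  have "E \<longlonglongrightarrow> 0"
    unfolding tendsto_iff dist_real_def
  proof (intro allI impI)
    fix e :: real assume "0 < e"
    define \<delta> where "\<delta> = e / (2 * (\<bar>S\<bar> + 2))"
    have "0 < \<bar>S\<bar> + 2" by (simp add: add_nonneg_pos)
    then have \<delta>: "0 < \<delta>" "\<delta> * (\<bar>S\<bar> + 2) = e / 2"
      using \<open>0 < e\<close> by (auto simp: \<delta>_def field_simps)
    show "\<forall>\<^sub>F n in sequentially. \<bar>E n - 0\<bar> < e"
      unfolding diff_zero using small[OF \<delta>(1)]
      by (rule eventually_mono) (use \<delta>(2) \<open>0 < e\<close> in linarith)
  qed
  then have "(\<lambda>n. E n + \<theta> * (\<Sum>m<R n. w n m)) \<longlonglongrightarrow> 0 + \<theta> * S"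
    by (intro tendsto_intros total)
  moreover have "E n + \<theta> * (\<Sum>m<R n. w n m) = (\<Sum>m<R n. w n m * c n m)" for n
    unfolding E_def by (simp add: sum_distrib_left algebra_simps sum_subtractf)
  ultimately show ?thesis by simp
qed

lemma lag_uniform_limit_normalized_sum:
  fixes w :: "nat \<Rightarrow> nat \<Rightarrow> real"
  assumes "lag_uniform_limit c R \<theta>" "\<And>n m. \<bar>c n m - \<theta>\<bar> \<le> C"
    and R: "filterlim R at_top sequentially"
    and w: "\<And>n m. m < R n \<Longrightarrow> 0 \<le> w n m \<and> w n m \<le> real (R n) powr \<gamma>"
    and total: "(\<lambda>n. (\<Sum>m<R n. w n m) / real (R n) powr (\<gamma> + 1)) \<longlonglongrightarrow> S"
  shows "(\<lambda>n. (\<Sum>m<R n. w n m * c n m) / real (R n) powr (\<gamma> + 1)) \<longlonglongrightarrow> \<theta> * S"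
proof -
  define v where "v n m = (if m < R n then w n m / real (R n) powr (\<gamma> + 1) else 0)" for n m
  have "(\<lambda>n. \<Sum>m<R n. v n m * c n m) \<longlonglongrightarrow> \<theta> * S"
  proof (rule lag_uniform_limit_weighted_sum[where B = "\<lambda>n. 1 / real (R n)"])
    show "v n m \<le> 1 / real (R n)" if "m < R n" for n m
    proof -
      have "v n m \<le> real (R n) powr \<gamma> / real (R n) powr (\<gamma> + 1)"
        using w[OF that] that unfolding v_def by (simp add: divide_right_mono)
      also have "\<dots> = 1 / real (R n)"
        using that by (simp add: powr_add)
      finally show ?thesis .
    qed
    show "(\<lambda>n. 1 / real (R n)) \<longlonglongrightarrow> 0"
      using filterlim_compose[OF filterlim_real_sequentially R]
      by (intro tendsto_divide_0[OF tendsto_const] filterlim_at_top_imp_at_infinity) simp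
    show "(\<lambda>n. \<Sum>m<R n. v n m) \<longlonglongrightarrow> S"
      using total by (simp add: v_def sum_divide_distrib)
  qed (use assms w in \<open>auto simp: v_def\<close>)
  then show ?thesis
    by (simp add: v_def sum_divide_distrib)
qed

lemma dist_average_le:
  fixes c :: "nat \<Rightarrow> real"
  assumes "0 < R" "\<And>m. \<bar>c m\<bar> \<le> C" "\<And>m. l \<le> m \<Longrightarrow> m < R \<Longrightarrow> \<bar>c m - c l\<bar> \<le> \<epsilon>" "0 \<le> \<epsilon>"
  shows "\<bar>c l - (\<Sum>m<R. c m) / real R\<bar> \<le> 2 * C * real l / real R + \<epsilon>"
proof -
  have "\<bar>\<Sum>m<R. c l - c m\<bar> \<le> real l * (2 * C) + (\<Sum>m<R. \<epsilon>)"
  proof (rule sum_abs_split_bound)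
    show "\<bar>c l - c m\<bar> \<le> 2 * C" for m
      using assms(2)[of l] assms(2)[of m] by linarith
    show "\<bar>c l - c m\<bar> \<le> \<epsilon>" if "m < R" "l \<le> m" for m
      using assms(3)[OF that(2,1)] by (simp add: abs_minus_commute)
    show "0 \<le> 2 * C"
      using assms(2)[of 0] by linarith
  qed (use assms(4) in simp)
  moreover have "c l - (\<Sum>m<R. c m) / real R = (\<Sum>m<R. c l - c m) / real R"
    using assms(1) by (simp add: sum_subtractf diff_divide_distrib)
  ultimately have "\<bar>c l - (\<Sum>m<R. c m) / real R\<bar> \<le> (real l * (2 * C) + real R * \<epsilon>) / real R"
    using assms(1) by (simp add: divide_right_mono)
  also have "\<dots> = 2 * C * real l / real R + \<epsilon>"
    using assms(1) by (simp add: field_simps)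
  finally show ?thesis .
qed

lemma lag_uniform_limit_of_average:
  assumes R: "filterlim R at_top sequentially"
    and cauchy: "lag_cauchy c R"
    and bounded: "\<And>n m. \<bar>c n m\<bar> \<le> C"
    and average: "(\<lambda>n. (\<Sum>m<R n. c n m) / real (R n)) \<longlonglongrightarrow> \<theta>"
  shows "lag_uniform_limit c R \<theta>"
  unfolding lag_uniform_limit_def
proof (intro allI impI)
  fix \<epsilon> :: real
  assume "\<epsilon> > 0"
  then have \<epsilon>4: "\<epsilon> / 4 > 0" by simp
  obtain l where l: "\<forall>\<^sub>F n in sequentially. \<forall>m. l \<le> m \<longrightarrow> m < R n \<longrightarrow> \<bar>c n m - c n l\<bar> \<le> \<epsilon> / 4"
    using cauchy \<epsilon>4 unfolding lag_cauchy_def by blast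
  have "(\<lambda>n. 2 * C * real l / real (R n)) \<longlonglongrightarrow> 0"
    using filterlim_compose[OF filterlim_real_sequentially R]
    by (intro tendsto_divide_0[OF tendsto_const] filterlim_at_top_imp_at_infinity) simp
  then have "\<forall>\<^sub>F n in sequentially. 2 * C * real l / real (R n) < \<epsilon> / 4"
    using \<epsilon>4 by (rule order_tendstoD(2))
  moreover have "\<forall>\<^sub>F n in sequentially. \<bar>(\<Sum>m<R n. c n m) / real (R n) - \<theta>\<bar> < \<epsilon> / 4"
    using average \<epsilon>4 unfolding tendsto_iff dist_real_def by blast
  moreover have "\<forall>\<^sub>F n in sequentially. l < R n"
    using R unfolding filterlim_at_top by (metis (mono_tags) Suc_le_eq eventually_mono)
  ultimately have "\<forall>\<^sub>F n in sequentially. \<forall>m. l \<le> m \<longrightarrow> m < R n \<longrightarrow> \<bar>c n m - \<theta>\<bar> \<le> \<epsilon>"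
    using l
  proof eventually_elim
    case (elim n)
    have "\<bar>c n l - (\<Sum>m<R n. c n m) / real (R n)\<bar> \<le> 2 * C * real l / real (R n) + \<epsilon> / 4"
      using elim(3,4) bounded \<epsilon>4 by (intro dist_average_le) auto
    then show ?case
    proof (intro allI impI)
      fix m assume "l \<le> m" "m < R n"
      then have "\<bar>c n m - c n l\<bar> \<le> \<epsilon> / 4" using elim(4) by blast
      then show "\<bar>c n m - \<theta>\<bar> \<le> \<epsilon>"
        using \<open>\<bar>c n l - _\<bar> \<le> _\<close> elim(1,2) by linarith
    qed
  qed
  then show "\<exists>l. \<forall>\<^sub>F n in sequentially. \<forall>m. l \<le> m \<longrightarrow> m < R n \<longrightarrow> \<bar>c n m - \<theta>\<bar> \<le> \<epsilon>"
    by blast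
qed

lemma is_normD:
  assumes "is_norm nrm"
  shows "nrm 0 = 0" "0 \<le> nrm x" "nrm (c *\<^sub>R x) = \<bar>c\<bar> * nrm x"
    "nrm (x + y) \<le> nrm x + nrm y" "nrm (- x) = nrm x"
  using assms unfolding is_norm_def by (auto dest: spec[of _ "-1"])

lemma is_norm_sum_le:
  assumes "is_norm nrm" "finite S"
  shows "nrm (sum f S) \<le> (\<Sum>i\<in>S. nrm (f i))"
  using assms(2)
proof induction
  case (insert i S)
  then show ?case
    using is_normD(4)[OF assms(1), of "f i" "sum f S"] by simp
qed (simp add: is_normD(1)[OF assms(1)])

lemma is_norm_le_norm:
  fixes nrm :: "real ^ 'd \<Rightarrow> real"
  assumes "is_norm nrm"
  shows "nrm x \<le> (\<Sum>i\<in>UNIV. nrm (axis i 1)) * norm x"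
proof -
  have "nrm x = nrm (\<Sum>i\<in>UNIV. (x $ i) *\<^sub>R axis i 1)"
    using basis_expansion[of x] by (simp add: scalar_mult_eq_scaleR)
  also have "\<dots> \<le> (\<Sum>i\<in>UNIV. nrm ((x $ i) *\<^sub>R axis i 1))"
    by (rule is_norm_sum_le[OF assms]) simp
  also have "\<dots> = (\<Sum>i\<in>UNIV. \<bar>x $ i\<bar> * nrm (axis i 1))"
    using is_normD(3)[OF assms] by simp
  also have "\<dots> \<le> (\<Sum>i\<in>UNIV. norm x * nrm (axis i 1))"
    by (intro sum_mono mult_right_mono component_le_norm_cart is_normD(2)[OF assms])
  finally show ?thesis
    by (simp add: sum_distrib_left mult.commute)
qed

lemma is_norm_continuous_on:
  fixes nrm :: "real ^ 'd \<Rightarrow> real"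
  assumes "is_norm nrm"
  shows "continuous_on UNIV nrm"
proof -
  define C where "C = (\<Sum>i\<in>UNIV. nrm (axis i (1::real)))"
  have "C-lipschitz_on UNIV nrm"
  proof (rule lipschitz_onI)
    fix x y :: "real ^ 'd"
    have "nrm x \<le> nrm (x - y) + nrm y" "nrm y \<le> nrm (x - y) + nrm x"
      using is_normD(4)[OF assms, of "x - y" y] is_normD(4)[OF assms, of "y - x" x]
        is_normD(5)[OF assms, of "x - y"] by simp_all
    moreover have "nrm (x - y) \<le> C * norm (x - y)"
      unfolding C_def by (rule is_norm_le_norm[OF assms])
    ultimately show "dist (nrm x) (nrm y) \<le> C * dist x y"
      by (simp add: dist_real_def dist_norm abs_le_iff)
    show "0 \<le> C"
      unfolding C_def by (intro sum_nonneg is_normD(2)[OF assms])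
  qed
  then show ?thesis by (rule lipschitz_on_continuous_on)
qed

lemma is_norm_borel_measurable:
  fixes nrm :: "real ^ 'd \<Rightarrow> real"
  assumes "is_norm nrm"
  shows "nrm \<in> borel_measurable borel"
  using is_norm_continuous_on[OF assms] by (rule borel_measurable_continuous_onI)

definition ramp :: "real \<Rightarrow> real \<Rightarrow> real" where
  "ramp d t = min 1 (max 0 (t / d))"

lemma ramp_bounds: "0 \<le> ramp d t" "ramp d t \<le> 1"
  by (auto simp: ramp_def)

lemma ramp_eq_1: "0 < d \<Longrightarrow> d \<le> t \<Longrightarrow> ramp d t = 1"
  by (simp add: ramp_def)

lemma ramp_eq_0: "0 < d \<Longrightarrow> t \<le> 0 \<Longrightarrow> ramp d t = 0"
  by (simp add: ramp_def divide_nonpos_pos)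

lemma continuous_on_ramp [continuous_intros]:
  "continuous_on S f \<Longrightarrow> continuous_on S (\<lambda>x. ramp d (f x))"
  unfolding ramp_def divide_inverse by (intro continuous_intros)

lemma borel_measurable_ramp [measurable]: "ramp d \<in> borel_measurable borel"
  unfolding ramp_def by measurable

lemma prod_ramp_bounds: "0 \<le> (\<Prod>k\<in>K. ramp d (f k))" "(\<Prod>k\<in>K. ramp d (f k)) \<le> 1"
  using ramp_bounds by (auto intro: prod_nonneg prod_le_1)

lemma prod_ramp_eq_1: "0 < d \<Longrightarrow> (\<And>k. k \<in> K \<Longrightarrow> d \<le> f k) \<Longrightarrow> (\<Prod>k\<in>K. ramp d (f k)) = 1"
  by (simp add: ramp_eq_1)

lemma prod_ramp_pos_imp:
  assumes "0 < d" "finite K" "0 < (\<Prod>k\<in>K. ramp d (f k))" "k \<in> K"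
  shows "0 < f k"
proof (rule ccontr)
  assume "\<not> 0 < f k"
  then have "(\<Prod>k\<in>K. ramp d (f k)) = 0"
    using assms ramp_eq_0[of d "f k"] by (intro prod_zero) auto
  then show False using assms(3) by simp
qed

section \<open>Exceedance times of a stationary series\<close>

lemma ball_atLeastAtMost_shift: "(\<forall>j\<in>{a..b}. P (j + i)) \<longleftrightarrow> (\<forall>k\<in>{a + i..b + (i::int)}. P k)"
  by (simp flip: image_add_atLeastAtMost')

lemma integral_indicator_partition:
  fixes f :: "'i \<Rightarrow> real"
  assumes "finite_measure M" "finite I"
    and sets: "\<And>i. i \<in> I \<Longrightarrow> E i \<in> sets M"
    and cover: "A = (\<Union>i\<in>I. E i)"
    and label: "\<And>i \<omega>. i \<in> I \<Longrightarrow> \<omega> \<in> E i \<Longrightarrow> g \<omega> = i"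
  shows "(\<integral>\<omega>. indicator A \<omega> * f (g \<omega>) \<partial>M) = (\<Sum>i\<in>I. f i * measure M (E i))"
proof -
  interpret finite_measure M by (rule assms(1))
  have "indicator A \<omega> * f (g \<omega>) = (\<Sum>i\<in>I. f i * indicator (E i) \<omega>)" for \<omega>
  proof (cases "\<omega> \<in> A")
    case True
    then obtain j where j: "j \<in> I" "\<omega> \<in> E j" using cover by blast
    have "(\<Sum>i\<in>I. f i * indicator (E i) \<omega>) = (\<Sum>i\<in>I. if i = j then f j else 0)"
      using label j by (intro sum.cong) (auto simp: indicator_def)
    then show ?thesis using True j assms(2) label by simp
  next
    case False
    then show ?thesis using cover by (auto intro!: sum.neutral)
  qed
  then have "(\<integral>\<omega>. indicator A \<omega> * f (g \<omega>) \<partial>M) = (\<integral>\<omega>. (\<Sum>i\<in>I. f i * indicator (E i) \<omega>) \<partial>M)"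
    by simp
  also have "\<dots> = (\<Sum>i\<in>I. \<integral>\<omega>. f i * indicator (E i) \<omega> \<partial>M)"
    using sets by (intro Bochner_Integration.integral_sum integrable_mult_right integrable_real_indicator)
      (auto simp: less_top[symmetric])
  also have "\<dots> = (\<Sum>i\<in>I. f i * measure M (E i))"
    using sets by (intro sum.cong) simp_all
  finally show ?thesis .
qed

locale stationary_series =
  fixes nrm :: "real ^ 'd \<Rightarrow> real" and M :: "'a measure" and X :: "'a \<Rightarrow> int \<Rightarrow> real ^ 'd"
  assumes is_norm: "is_norm nrm"
    and random_series: "random_series M X"
    and stationary: "strictly_stationary M X"
begin

sublocale M: prob_space M
  using random_series unfolding random_series_def by simp

lemma measurable_X [measurable]: "(\<lambda>\<omega>. X \<omega> j) \<in> borel_measurable M"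
  using random_series unfolding random_series_def by simp

lemma measurable_nrm [measurable]: "nrm \<in> borel_measurable borel"
  by (rule is_norm_borel_measurable[OF is_norm])

definition quiet_paths :: "real \<Rightarrow> int set \<Rightarrow> (int \<Rightarrow> real ^ 'd) set" where
  "quiet_paths x J = {z. x < nrm (z 0) \<and> (\<forall>j\<in>J. nrm (z j) \<le> x)}"

definition quiet :: "real \<Rightarrow> int set \<Rightarrow> 'a set" where
  "quiet x J = {\<omega>\<in>space M. X \<omega> \<in> quiet_paths x J}"

definition exceedance :: "real \<Rightarrow> 'a set" where
  "exceedance x = {\<omega>\<in>space M. x < nrm (X \<omega> 0)}"

lemma sets_exceedance [measurable]: "exceedance x \<in> sets M"
  unfolding exceedance_def by measurable

lemma sets_quiet [measurable]: "quiet x J \<in> sets M"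
proof -
  have "quiet x J = {\<omega>\<in>space M. x < nrm (X \<omega> 0) \<and> (\<forall>j\<in>J. nrm (X \<omega> j) \<le> x)}"
    by (simp add: quiet_def quiet_paths_def)
  also have "\<dots> \<in> sets M"
    by measurable
  finally show ?thesis .
qed

lemma quiet_antimono: "J \<subseteq> J' \<Longrightarrow> quiet x J' \<subseteq> quiet x J"
  by (auto simp: quiet_def quiet_paths_def)

lemma measure_quiet_le_exceedance: "measure M (quiet x J) \<le> measure M (exceedance x)"
  unfolding exceedance_def by (rule M.finite_measure_mono) (auto simp: quiet_def quiet_paths_def)

definition far_exceedance :: "nat \<Rightarrow> nat \<Rightarrow> real \<Rightarrow> 'a set" where
  "far_exceedance R l x = {\<omega>\<in>space M. \<exists>j. int l \<le> \<bar>j\<bar> \<and> \<bar>j\<bar> \<le> int R \<and> x < nrm (X \<omega> j)}"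

lemma measure_quiet_diff_le_far:
  assumes "J \<subseteq> J'" "\<And>j. j \<in> J' - J \<Longrightarrow> int l \<le> \<bar>j\<bar> \<and> \<bar>j\<bar> \<le> int R"
  shows "measure M (quiet x J) - measure M (quiet x J') \<le> measure M (far_exceedance R l x \<inter> exceedance x)"
proof -
  have "quiet x J - quiet x J' \<subseteq> far_exceedance R l x \<inter> exceedance x"
  proof
    fix \<omega> assume \<omega>: "\<omega> \<in> quiet x J - quiet x J'"
    then obtain j where "j \<in> J' - J" "x < nrm (X \<omega> j)"
      by (auto simp: quiet_def quiet_paths_def)
    then show "\<omega> \<in> far_exceedance R l x \<inter> exceedance x"
      using \<omega> assms(2) by (force simp: quiet_def quiet_paths_def exceedance_def far_exceedance_def)
  qed
  moreover have "far_exceedance R l x \<in> sets M"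
    unfolding far_exceedance_def by measurable
  ultimately show ?thesis
    using quiet_antimono[OF assms(1)]
    by (simp add: M.finite_measure_Diff[symmetric] M.finite_measure_mono)
qed

lemma sets_quiet_paths [measurable]: "quiet_paths x J \<in> sets (Pi\<^sub>M UNIV (\<lambda>_. borel))"
proof -
  have "quiet_paths x J = {z\<in>space (Pi\<^sub>M UNIV (\<lambda>_. borel)). x < nrm (z 0) \<and> (\<forall>j\<in>J. nrm (z j) \<le> x)}"
    by (simp add: quiet_paths_def space_PiM PiE_UNIV_domain)
  also have "\<dots> \<in> sets (Pi\<^sub>M UNIV (\<lambda>_. borel))"
    by measurable
  finally show ?thesis .
qed

lemma measurable_shift [measurable]: "(\<lambda>\<omega> j. X \<omega> (j + h)) \<in> measurable M (Pi\<^sub>M UNIV (\<lambda>_. borel))"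
  by (rule measurable_PiM_single') (auto simp: PiE_UNIV_domain)

lemma measure_shift_quiet:
  "measure M {\<omega>\<in>space M. (\<lambda>j. X \<omega> (j + h)) \<in> quiet_paths x J} = measure M (quiet x J)"
proof -
  let ?P = "Pi\<^sub>M (UNIV :: int set) (\<lambda>_. borel :: (real ^ 'd) measure)"
  have "distr M ?P (\<lambda>\<omega> j. X \<omega> (j + h)) = distr M ?P (\<lambda>\<omega> j. X \<omega> (j + 0))"
    using stationary unfolding strictly_stationary_def by simp
  then have "measure (distr M ?P (\<lambda>\<omega> j. X \<omega> (j + h))) (quiet_paths x J)
      = measure (distr M ?P (\<lambda>\<omega> j. X \<omega> (j + 0))) (quiet_paths x J)"
    by (simp only:)
  then show ?thesis
    unfolding measure_distr[OF measurable_shift sets_quiet_paths]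
      by (simp add: vimage_def Int_def quiet_def conj_commute)
qed

lemma first_exceedance_exists:
  assumes "\<omega> \<in> A1 nrm M X R x"
  shows "\<exists>i\<in>{1..int R}. x < nrm (X \<omega> i) \<and> (\<forall>k. 1 \<le> k \<and> k < i \<longrightarrow> nrm (X \<omega> k) \<le> x)"
proof -
  define T where "T = {i\<in>{1..int R}. x < nrm (X \<omega> i)}"
  have "finite T"
    unfolding T_def by (rule finite_subset[of _ "{1..int R}"]) auto
  moreover have "T \<noteq> {}"
    using assms unfolding T_def A1_def by auto
  ultimately have extremal: "Min T \<in> T" "\<And>k. k \<in> T \<Longrightarrow> Min T \<le> k"
    by simp_all
  show ?thesis
  proof (intro bexI[of _ "Min T"] conjI allI impI)
    show "Min T \<in> {1..int R}" "x < nrm (X \<omega> (Min T))"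
      using extremal(1) unfolding T_def by auto
    fix k assume "1 \<le> k \<and> k < Min T"
    then show "nrm (X \<omega> k) \<le> x"
      using extremal(1) extremal(2)[of k] unfolding T_def by force
  qed
qed

lemma last_exceedance_exists:
  assumes "\<omega> \<in> A1 nrm M X R x"
  shows "\<exists>i\<in>{1..int R}. x < nrm (X \<omega> i) \<and> (\<forall>k. i < k \<and> k \<le> int R \<longrightarrow> nrm (X \<omega> k) \<le> x)"
proof -
  define T where "T = {i\<in>{1..int R}. x < nrm (X \<omega> i)}"
  have "finite T"
    unfolding T_def by (rule finite_subset[of _ "{1..int R}"]) auto
  moreover have "T \<noteq> {}"
    using assms unfolding T_def A1_def by auto
  ultimately have extremal: "Max T \<in> T" "\<And>k. k \<in> T \<Longrightarrow> k \<le> Max T"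
    by simp_all
  show ?thesis
  proof (intro bexI[of _ "Max T"] conjI allI impI)
    show "Max T \<in> {1..int R}" "x < nrm (X \<omega> (Max T))"
      using extremal(1) unfolding T_def by auto
    fix k assume "Max T < k \<and> k \<le> int R"
    then show "nrm (X \<omega> k) \<le> x"
      using extremal(1) extremal(2)[of k] unfolding T_def by force
  qed
qed

lemma integral_first_exceedance:
  "(\<integral>\<omega>. indicator (A1 nrm M X R x) \<omega> * f (t_first nrm X R x \<omega>) \<partial>M)
     = (\<Sum>m<R. f (int m + 1) * measure M (quiet x {- int m..-1}))"
proof -
  define E where "E i = {\<omega>\<in>space M. (\<lambda>j. X \<omega> (j + i)) \<in> quiet_paths x {1 - i..-1}}" for i
  have E_iff: "\<omega> \<in> E i \<longleftrightarrow>
      \<omega> \<in> space M \<and> x < nrm (X \<omega> i) \<and> (\<forall>k. 1 \<le> k \<and> k < i \<longrightarrow> nrm (X \<omega> k) \<le> x)" for \<omega> i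
    using ball_atLeastAtMost_shift[where P = "\<lambda>k. nrm (X \<omega> k) \<le> x" and a = "1 - i" and b = "-1"]
    by (auto simp: E_def quiet_paths_def)
  have "(\<integral>\<omega>. indicator (A1 nrm M X R x) \<omega> * f (t_first nrm X R x \<omega>) \<partial>M)
      = (\<Sum>i\<in>{1..int R}. f i * measure M (E i))"
  proof (rule integral_indicator_partition)
    show "A1 nrm M X R x = (\<Union>i\<in>{1..int R}. E i)"
      using first_exceedance_exists by (fastforce simp: E_iff A1_def)
    show "t_first nrm X R x \<omega> = i" if "i \<in> {1..int R}" "\<omega> \<in> E i" for i \<omega>
      unfolding t_first_def using that by (intro Least_equality) (auto simp: E_iff not_le[symmetric])
  qed (simp_all add: E_def M.finite_measure_axioms)
  also have "\<dots> = (\<Sum>m<R. f (int m + 1) * measure M (E (int m + 1)))"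
    by (rule sum.reindex_bij_witness[of _ "\<lambda>m. int m + 1" "\<lambda>i. nat (i - 1)"]) auto
  also have "\<dots> = (\<Sum>m<R. f (int m + 1) * measure M (quiet x {- int m..-1}))"
    unfolding E_def by (simp add: measure_shift_quiet)
  finally show ?thesis .
qed

lemma integral_last_exceedance:
  "(\<integral>\<omega>. indicator (A1 nrm M X R x) \<omega> * f (t_last nrm X R x \<omega>) \<partial>M)
     = (\<Sum>m<R. f (int R - int m) * measure M (quiet x {1..int m}))"
proof -
  define E where "E i = {\<omega>\<in>space M. (\<lambda>j. X \<omega> (j + i)) \<in> quiet_paths x {1..int R - i}}" for i
  have E_iff: "\<omega> \<in> E i \<longleftrightarrow>
      \<omega> \<in> space M \<and> x < nrm (X \<omega> i) \<and> (\<forall>k. i < k \<and> k \<le> int R \<longrightarrow> nrm (X \<omega> k) \<le> x)" for \<omega> i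
    using ball_atLeastAtMost_shift[where P = "\<lambda>k. nrm (X \<omega> k) \<le> x" and a = 1 and b = "int R - i"]
    by (auto simp: E_def quiet_paths_def)
  have "(\<integral>\<omega>. indicator (A1 nrm M X R x) \<omega> * f (t_last nrm X R x \<omega>) \<partial>M)
      = (\<Sum>i\<in>{1..int R}. f i * measure M (E i))"
  proof (rule integral_indicator_partition)
    show "A1 nrm M X R x = (\<Union>i\<in>{1..int R}. E i)"
      using last_exceedance_exists by (fastforce simp: E_iff A1_def)
    show "t_last nrm X R x \<omega> = i" if "i \<in> {1..int R}" "\<omega> \<in> E i" for i \<omega>
      unfolding t_last_def using that by (intro Greatest_equality) (auto simp: E_iff not_le[symmetric])
  qed (simp_all add: E_def M.finite_measure_axioms)
  also have "\<dots> = (\<Sum>m<R. f (int R - int m) * measure M (E (int R - int m)))"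
    by (rule sum.reindex_bij_witness[of _ "\<lambda>m. int R - int m" "\<lambda>i. nat (int R - i)"]) auto
  also have "\<dots> = (\<Sum>m<R. f (int R - int m) * measure M (quiet x {1..int m}))"
    unfolding E_def by (simp add: measure_shift_quiet)
  finally show ?thesis .
qed

lemma sum_measure_quiet_past_eq_future:
  "(\<Sum>m<R. measure M (quiet x {- int m..-1})) = (\<Sum>m<R. measure M (quiet x {1..int m}))"
  using integral_first_exceedance[of R x "\<lambda>_. 1"] integral_last_exceedance[of R x "\<lambda>_. 1"] by simp

end

section \<open>Approximation by the tail process\<close>

lemma (in finite_measure) measure_le_integral:
  assumes "A \<in> sets M" "integrable M f" "\<And>\<omega>. \<omega> \<in> space M \<Longrightarrow> indicator A \<omega> \<le> f \<omega>"
  shows "measure M A \<le> (\<integral>\<omega>. f \<omega> \<partial>M)"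
  using integral_mono[OF _ assms(2,3)] assms(1)
    by (simp add: integrable_real_indicator less_top[symmetric])

lemma (in finite_measure) integral_le_measure:
  assumes "A \<in> sets M" "integrable M f" "\<And>\<omega>. \<omega> \<in> space M \<Longrightarrow> f \<omega> \<le> indicator A \<omega>"
  shows "(\<integral>\<omega>. f \<omega> \<partial>M) \<le> measure M A"
  using integral_mono[OF assms(2) _ assms(3)] assms(1)
    by (simp add: integrable_real_indicator less_top[symmetric])

lemma continuous_on_coordinate [continuous_intros]:
  "continuous_on S (\<lambda>z :: int \<Rightarrow> 'v::topological_space. z k)"
  by (rule continuous_on_subset[OF continuous_on_product_coordinates]) simp

locale tail_series = stationary_series nrm M X
  for nrm :: "real ^ 'd \<Rightarrow> real" and M :: "'a measure" and X :: "'a \<Rightarrow> int \<Rightarrow> real ^ 'd" +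
  fixes N :: "'b measure" and Y :: "'b \<Rightarrow> int \<Rightarrow> real ^ 'd" and \<alpha> :: real
  assumes tail_process: "is_tail_process nrm M X N Y"
    and regular_variation: "\<And>y. 0 < y \<Longrightarrow>
      ((\<lambda>x. measure M {\<omega>\<in>space M. x * y < nrm (X \<omega> 0)} / measure M {\<omega>\<in>space M. x < nrm (X \<omega> 0)})
        \<longlongrightarrow> y powr (-\<alpha>)) at_top"
    and tail_prob_pos: "\<And>x. 0 < measure M {\<omega>\<in>space M. x < nrm (X \<omega> 0)}"
begin

sublocale N: prob_space N
  using tail_process unfolding is_tail_process_def random_series_def by simp

lemma measurable_Y [measurable]: "(\<lambda>\<omega>. Y \<omega> j) \<in> borel_measurable N"
  using tail_process unfolding is_tail_process_def random_series_def by simp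

lemma continuous_on_nrm [continuous_intros]: "continuous_on S f \<Longrightarrow> continuous_on S (\<lambda>x. nrm (f x))"
  by (rule continuous_on_compose2[OF is_norm_continuous_on[OF is_norm]]) auto

lemma nrm_inverse_scale: "0 < x \<Longrightarrow> nrm (inverse x *\<^sub>R v) = nrm v / x"
  using is_normD(3)[OF is_norm, of "inverse x" v] by (simp add: field_simps)

lemma measure_exceedance_pos: "0 < measure M (exceedance x)"
  using tail_prob_pos[of x] by (simp add: exceedance_def)

definition tail_quiet :: "real \<Rightarrow> int set \<Rightarrow> 'b set" where
  "tail_quiet t J = {\<omega>\<in>space N. \<forall>j\<in>J. nrm (Y \<omega> j) \<le> t}"

lemma sets_tail_quiet [measurable]: "tail_quiet t J \<in> sets N"
  unfolding tail_quiet_def by measurable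

definition scaled_mean :: "((int \<Rightarrow> real ^ 'd) \<Rightarrow> real) \<Rightarrow> real \<Rightarrow> real" where
  "scaled_mean g x = (\<integral>\<omega>. indicator (exceedance x) \<omega> * g (\<lambda>l. inverse x *\<^sub>R X \<omega> l) \<partial>M)
     / measure M (exceedance x)"

lemma tail_process_limit:
  fixes g :: "(int \<Rightarrow> real ^ 'd) \<Rightarrow> real"
  assumes "finite K" "\<And>z z'. (\<forall>k\<in>K. z k = z' k) \<Longrightarrow> g z = g z'"
    and "continuous_on UNIV g" "\<And>z. 0 \<le> g z" "\<And>z. g z \<le> 1"
  shows "(scaled_mean g \<longlongrightarrow> (\<integral>\<omega>. g (Y \<omega>) \<partial>N)) at_top"
proof -
  define a where "a = Min (insert 0 K)"
  define b where "b = Max (insert 0 K)"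
  have "K \<subseteq> {a..b}" "a \<le> 0" "0 \<le> b"
    using assms(1) unfolding a_def b_def by auto
  moreover have "bounded (range g)"
    using assms(4,5) unfolding bounded_iff
      by (intro exI[of _ 1]) (auto simp: abs_le_iff intro: order_trans[OF _ assms(4)])
  moreover have "\<forall>z z'. (\<forall>l\<in>{a..b}. z l = z' l) \<longrightarrow> g z = g z'"
    using assms(2) \<open>K \<subseteq> {a..b}\<close> by blast
  ultimately show ?thesis
    using tail_process assms(3) order_trans[OF \<open>a \<le> 0\<close> \<open>0 \<le> b\<close>]
    unfolding is_tail_process_def exceedance_def scaled_mean_def by blast
qed

lemma measurable_scaled [measurable]:
  "(\<lambda>\<omega> l. inverse x *\<^sub>R X \<omega> l) \<in> measurable M (Pi\<^sub>M UNIV (\<lambda>_. borel))"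
  by (rule measurable_PiM_single') (auto simp: PiE_UNIV_domain)

lemma measurable_Y_path [measurable]: "Y \<in> measurable N (Pi\<^sub>M UNIV (\<lambda>_. borel))"
proof -
  have "(\<lambda>\<omega> l. Y \<omega> l) \<in> measurable N (Pi\<^sub>M UNIV (\<lambda>_. borel))"
    by (rule measurable_PiM_single') (auto simp: PiE_UNIV_domain)
  then show ?thesis by simp
qed

lemma measure_le_scaled_mean:
  assumes "A \<in> sets M" "g \<in> borel_measurable (Pi\<^sub>M UNIV (\<lambda>_. borel))" "\<And>z. 0 \<le> g z" "\<And>z. g z \<le> 1"
    and "\<And>\<omega>. \<omega> \<in> A \<Longrightarrow> \<omega> \<in> exceedance x \<and> g (\<lambda>l. inverse x *\<^sub>R X \<omega> l) = 1"
  shows "measure M A / measure M (exceedance x) \<le> scaled_mean g x"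
proof -
  have "measure M A \<le> (\<integral>\<omega>. indicator (exceedance x) \<omega> * g (\<lambda>l. inverse x *\<^sub>R X \<omega> l) \<partial>M)"
  proof (rule M.measure_le_integral[OF assms(1)])
    show "integrable M (\<lambda>\<omega>. indicator (exceedance x) \<omega> * g (\<lambda>l. inverse x *\<^sub>R X \<omega> l))"
      using assms(2-4) by (intro M.integrable_const_bound[where B = 1]) (auto simp: indicator_def)
    show "indicator A \<omega> \<le> indicator (exceedance x) \<omega> * g (\<lambda>l. inverse x *\<^sub>R X \<omega> l)" for \<omega>
      using assms(3) assms(5)[of \<omega>] by (auto simp: indicator_def)
  qed
  then show ?thesis
    unfolding scaled_mean_def using measure_exceedance_pos[of x] by (simp add: divide_right_mono)
qed

lemma scaled_mean_le_measure:
  assumes "A \<in> sets M" "g \<in> borel_measurable (Pi\<^sub>M UNIV (\<lambda>_. borel))" "\<And>z. 0 \<le> g z" "\<And>z. g z \<le> 1"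
    and "\<And>\<omega>. \<omega> \<in> exceedance x \<Longrightarrow> 0 < g (\<lambda>l. inverse x *\<^sub>R X \<omega> l) \<Longrightarrow> \<omega> \<in> A"
  shows "scaled_mean g x * measure M (exceedance x) \<le> measure M A"
proof -
  have "(\<integral>\<omega>. indicator (exceedance x) \<omega> * g (\<lambda>l. inverse x *\<^sub>R X \<omega> l) \<partial>M) \<le> measure M A"
  proof (rule M.integral_le_measure[OF assms(1)])
    show "integrable M (\<lambda>\<omega>. indicator (exceedance x) \<omega> * g (\<lambda>l. inverse x *\<^sub>R X \<omega> l))"
      using assms(2-4) by (intro M.integrable_const_bound[where B = 1]) (auto simp: indicator_def)
    show "indicator (exceedance x) \<omega> * g (\<lambda>l. inverse x *\<^sub>R X \<omega> l) \<le> indicator A \<omega>" for \<omega>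
      using assms(3,4) assms(5)[of \<omega>]
        by (cases "0 < g (\<lambda>l. inverse x *\<^sub>R X \<omega> l)") (auto simp: indicator_def not_less)
  qed
  then show ?thesis
    unfolding scaled_mean_def using measure_exceedance_pos[of x] by simp
qed

lemma tail_mean_le_measure:
  assumes "A \<in> sets N" "g \<in> borel_measurable (Pi\<^sub>M UNIV (\<lambda>_. borel))" "\<And>z. 0 \<le> g z" "\<And>z. g z \<le> 1"
    and "\<And>\<omega>. \<omega> \<in> space N \<Longrightarrow> 0 < g (Y \<omega>) \<Longrightarrow> \<omega> \<in> A"
  shows "(\<integral>\<omega>. g (Y \<omega>) \<partial>N) \<le> measure N A"
proof (rule N.integral_le_measure[OF assms(1)])
  show "integrable N (\<lambda>\<omega>. g (Y \<omega>))"
    using assms(2-4) by (intro N.integrable_const_bound[where B = 1]) auto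
  show "g (Y \<omega>) \<le> indicator A \<omega>" if "\<omega> \<in> space N" for \<omega>
    using assms(3,4) assms(5)[of \<omega>] that by (cases "0 < g (Y \<omega>)") (auto simp: indicator_def not_less)
qed

lemma measure_le_tail_mean:
  assumes "A \<in> sets N" "g \<in> borel_measurable (Pi\<^sub>M UNIV (\<lambda>_. borel))" "\<And>z. 0 \<le> g z" "\<And>z. g z \<le> 1"
    and "\<And>\<omega>. \<omega> \<in> A \<Longrightarrow> g (Y \<omega>) = 1"
  shows "measure N A \<le> (\<integral>\<omega>. g (Y \<omega>) \<partial>N)"
proof (rule N.measure_le_integral[OF assms(1)])
  show "integrable N (\<lambda>\<omega>. g (Y \<omega>))"
    using assms(2-4) by (intro N.integrable_const_bound[where B = 1]) auto
  show "indicator A \<omega> \<le> g (Y \<omega>)" for \<omega>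
    using assms(3) assms(5)[of \<omega>] by (auto simp: indicator_def)
qed

text \<open>The tail process is not assumed to satisfy \<open>|Y\<^sub>0| > 1\<close> almost surely; regular
  variation supplies this through the following bound.\<close>

lemma measure_norm_Y0_gt_ge:
  assumes "1 \<le> c" "0 < d"
  shows "(c + d) powr (-\<alpha>) \<le> measure N {\<omega>\<in>space N. c < nrm (Y \<omega> 0)}"
proof -
  define g where "g z = ramp d (nrm (z 0) - c)" for z :: "int \<Rightarrow> real ^ 'd"
  have g: "g \<in> borel_measurable (Pi\<^sub>M UNIV (\<lambda>_. borel))" "0 \<le> g z" "g z \<le> 1" for z
    unfolding g_def by (measurable, simp_all add: ramp_bounds)
  have rv: "((\<lambda>x. measure M (exceedance (x * (c + d))) / measure M (exceedance x))
      \<longlongrightarrow> (c + d) powr (-\<alpha>)) at_top"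
    using regular_variation[of "c + d"] assms unfolding exceedance_def by simp
  have lim: "(scaled_mean g \<longlongrightarrow> (\<integral>\<omega>. g (Y \<omega>) \<partial>N)) at_top"
    by (rule tail_process_limit[of "{0}"]) (auto simp: g_def ramp_bounds intro!: continuous_intros)
  have "(c + d) powr (-\<alpha>) \<le> (\<integral>\<omega>. g (Y \<omega>) \<partial>N)"
  proof (rule tendsto_le[OF trivial_limit_at_top_linorder lim rv])
    show "\<forall>\<^sub>F x in at_top.
        measure M (exceedance (x * (c + d))) / measure M (exceedance x) \<le> scaled_mean g x"
      using eventually_gt_at_top[of 0]
    proof eventually_elim
      case (elim x)
      show ?case
      proof (rule measure_le_scaled_mean[OF _ g])
        fix \<omega> assume "\<omega> \<in> exceedance (x * (c + d))"
        moreover have "x \<le> x * (c + d)" using elim assms by simp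
        ultimately have "\<omega> \<in> exceedance x" "d \<le> nrm (X \<omega> 0) / x - c"
          using elim by (auto simp: exceedance_def field_simps)
        then show "\<omega> \<in> exceedance x \<and> g (\<lambda>l. inverse x *\<^sub>R X \<omega> l) = 1"
          using elim assms by (simp add: g_def nrm_inverse_scale ramp_eq_1)
      qed simp
    qed
  qed
  also have "\<dots> \<le> measure N {\<omega>\<in>space N. c < nrm (Y \<omega> 0)}"
    by (rule tail_mean_le_measure[OF _ g]) (use assms in \<open>auto simp: g_def not_le[symmetric] ramp_eq_0\<close>)
  finally show ?thesis .
qed

definition upper_test :: "real \<Rightarrow> int set \<Rightarrow> (int \<Rightarrow> real ^ 'd) \<Rightarrow> real" where
  "upper_test d J z = (\<Prod>j\<in>J. ramp d (1 + d - nrm (z j)))"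

definition lower_test :: "real \<Rightarrow> real \<Rightarrow> int set \<Rightarrow> (int \<Rightarrow> real ^ 'd) \<Rightarrow> real" where
  "lower_test d c J z = (\<Prod>j\<in>J. ramp d (c - nrm (z j))) * ramp d (nrm (z 0) - c)"

lemma upper_test:
  "upper_test d J \<in> borel_measurable (Pi\<^sub>M UNIV (\<lambda>_. borel))"
    "0 \<le> upper_test d J z" "upper_test d J z \<le> 1"
  unfolding upper_test_def by (measurable, simp_all add: prod_ramp_bounds)

lemma lower_test:
  "lower_test d c J \<in> borel_measurable (Pi\<^sub>M UNIV (\<lambda>_. borel))"
    "0 \<le> lower_test d c J z" "lower_test d c J z \<le> 1"
  unfolding lower_test_def
  by (measurable, intro mult_nonneg_nonneg prod_ramp_bounds ramp_bounds,
      intro mult_le_one prod_ramp_bounds ramp_bounds)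

lemma scaled_mean_upper_test_tendsto:
  "finite J \<Longrightarrow> (scaled_mean (upper_test d J) \<longlongrightarrow> (\<integral>\<omega>. upper_test d J (Y \<omega>) \<partial>N)) at_top"
  using upper_test(2,3)
    by (intro tail_process_limit) (auto simp: upper_test_def intro!: prod.cong continuous_intros)

lemma scaled_mean_lower_test_tendsto:
  "finite J \<Longrightarrow> (scaled_mean (lower_test d c J) \<longlongrightarrow> (\<integral>\<omega>. lower_test d c J (Y \<omega>) \<partial>N)) at_top"
  using lower_test(2,3)
  by (intro tail_process_limit[of "insert 0 J"])
    (auto simp: lower_test_def intro!: prod.cong continuous_intros)

lemma conditional_quiet_le_upper_test:
  assumes "0 < x" "0 < d"
  shows "measure M (quiet x J) / measure M (exceedance x) \<le> scaled_mean (upper_test d J) x"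
proof (rule measure_le_scaled_mean[OF _ upper_test])
  fix \<omega> assume "\<omega> \<in> quiet x J"
  then have "\<omega> \<in> exceedance x" "\<And>j. j \<in> J \<Longrightarrow> nrm (X \<omega> j) / x \<le> 1"
    using assms(1) by (auto simp: quiet_def quiet_paths_def exceedance_def)
  then show "\<omega> \<in> exceedance x \<and> upper_test d J (\<lambda>l. inverse x *\<^sub>R X \<omega> l) = 1"
    using assms by (simp add: upper_test_def nrm_inverse_scale prod_ramp_eq_1)
qed simp

lemma tail_mean_upper_test_le:
  assumes "finite J" "0 < d"
  shows "(\<integral>\<omega>. upper_test d J (Y \<omega>) \<partial>N) \<le> measure N (tail_quiet (1 + d) J)"
proof (rule tail_mean_le_measure[OF _ upper_test])
  fix \<omega> assume "\<omega> \<in> space N" "0 < upper_test d J (Y \<omega>)"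
  then show "\<omega> \<in> tail_quiet (1 + d) J"
    using prod_ramp_pos_imp[OF assms(2,1)] by (force simp: tail_quiet_def upper_test_def)
qed simp

lemma conditional_quiet_ge_lower_test:
  assumes "finite J" "0 < x" "0 < d" "1 \<le> c"
  shows "scaled_mean (lower_test d c J) (x / c) \<le> measure M (quiet x J) / measure M (exceedance x)"
proof -
  have "x / c \<le> x"
    using assms by (simp add: divide_le_eq)
  have "scaled_mean (lower_test d c J) (x / c) * measure M (exceedance (x / c)) \<le> measure M (quiet x J)"
  proof (rule scaled_mean_le_measure[OF _ lower_test])
    fix \<omega> assume \<omega>: "\<omega> \<in> exceedance (x / c)" "0 < lower_test d c J (\<lambda>l. inverse (x / c) *\<^sub>R X \<omega> l)"
    let ?z = "\<lambda>l. inverse (x / c) *\<^sub>R X \<omega> l"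
    have past: "0 < (\<Prod>j\<in>J. ramp d (c - nrm (?z j)))" and present: "0 < ramp d (nrm (?z 0) - c)"
      using \<omega>(2) prod_ramp_bounds(1)[of d "\<lambda>j. c - nrm (?z j)" J] ramp_bounds(1)[of d "nrm (?z 0) - c"]
      unfolding lower_test_def zero_less_mult_iff by linarith+
    have "0 < x / c" using assms by simp
    then have "nrm (?z j) = nrm (X \<omega> j) * c / x" for j
      using nrm_inverse_scale[OF \<open>0 < x / c\<close>, of "X \<omega> j"] by simp
    then have scale: "nrm (?z j) < c \<longleftrightarrow> nrm (X \<omega> j) < x" "c < nrm (?z j) \<longleftrightarrow> x < nrm (X \<omega> j)" for j
      using assms by (simp_all add: pos_divide_less_eq pos_less_divide_eq)
    have "nrm (X \<omega> j) < x" if "j \<in> J" for j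
      using prod_ramp_pos_imp[OF assms(3,1) past that] scale by simp
    moreover have "x < nrm (X \<omega> 0)"
      using present ramp_eq_0[OF assms(3), of "nrm (?z 0) - c"] scale(2)[of 0] by force
    ultimately show "\<omega> \<in> quiet x J"
      using \<omega>(1) by (auto simp: quiet_def quiet_paths_def exceedance_def less_imp_le)
  qed simp
  moreover have "measure M (exceedance x) \<le> measure M (exceedance (x / c))"
    using \<open>x / c \<le> x\<close> by (intro M.finite_measure_mono) (auto simp: exceedance_def)
  moreover have "0 \<le> scaled_mean (lower_test d c J) (x / c)"
    unfolding scaled_mean_def using lower_test(2)
      by (intro divide_nonneg_nonneg integral_nonneg_AE) auto
  ultimately show ?thesis
    using measure_exceedance_pos[of x]
    by (simp add: le_divide_eq order_trans[OF mult_left_mono])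
qed

lemma tail_mean_lower_test_ge:
  assumes "0 < d"
  shows "measure N (tail_quiet 1 J) + measure N {\<omega>\<in>space N. 1 + 3 * d < nrm (Y \<omega> 0)} - 1
    \<le> (\<integral>\<omega>. lower_test d (1 + 2 * d) J (Y \<omega>) \<partial>N)"
proof -
  define Z where "Z = {\<omega>\<in>space N. 1 + 3 * d < nrm (Y \<omega> 0)}"
  have "measure N (tail_quiet 1 J \<inter> Z) \<le> (\<integral>\<omega>. lower_test d (1 + 2 * d) J (Y \<omega>) \<partial>N)"
    by (rule measure_le_tail_mean[OF _ lower_test])
      (use assms in \<open>auto simp: Z_def tail_quiet_def lower_test_def ramp_eq_1 prod_ramp_eq_1\<close>)
  moreover have "measure N (tail_quiet 1 J \<union> Z)
      = measure N (tail_quiet 1 J) + measure N Z - measure N (tail_quiet 1 J \<inter> Z)"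
    by (rule measure_Un3) (simp_all add: N.fmeasurable_eq_sets Z_def)
  ultimately show ?thesis
    using N.prob_le_1[of "tail_quiet 1 J \<union> Z"] unfolding Z_def by linarith
qed

lemma eventually_conditional_quiet_le:
  assumes "finite J" "0 < d" "0 < \<epsilon>"
  shows "\<forall>\<^sub>F x in at_top. measure M (quiet x J) / measure M (exceedance x)
           \<le> measure N (tail_quiet (1 + d) J) + \<epsilon>"
proof -
  have "\<forall>\<^sub>F x in at_top. scaled_mean (upper_test d J) x < (\<integral>\<omega>. upper_test d J (Y \<omega>) \<partial>N) + \<epsilon>"
    using scaled_mean_upper_test_tendsto[OF assms(1)] by (rule order_tendstoD) (use assms in simp)
  then show ?thesis
    using eventually_gt_at_top[of 0]
  proof eventually_elim
    case (elim x)
    then show ?case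
      using conditional_quiet_le_upper_test[OF elim(2) assms(2), of J] tail_mean_upper_test_le[OF assms(1,2)]
        by linarith
  qed
qed

text \<open>Testing at the lower level \<open>x / c\<close> with \<open>c = 1 + 2 d\<close> keeps a margin \<open>d\<close> on both sides
  of the threshold, so no continuity of the law of \<open>Y\<close> at level 1 is needed.\<close>

lemma eventually_conditional_quiet_ge:
  assumes "finite J" "0 < d" "0 < \<epsilon>"
  shows "\<forall>\<^sub>F x in at_top. measure N (tail_quiet 1 J) + measure N {\<omega>\<in>space N. 1 + 3 * d < nrm (Y \<omega> 0)} - 1 - \<epsilon>
           \<le> measure M (quiet x J) / measure M (exceedance x)"
proof -
  let ?c = "1 + 2 * d"
  have "filterlim (\<lambda>x. x / ?c) at_top at_top"
    using filterlim_tendsto_pos_mult_at_top[OF tendsto_const _ filterlim_ident, of "inverse ?c"] assms(2)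
    by (simp add: divide_inverse mult.commute)
  with scaled_mean_lower_test_tendsto[OF assms(1)]
  have "((\<lambda>x. scaled_mean (lower_test d ?c J) (x / ?c))
      \<longlongrightarrow> (\<integral>\<omega>. lower_test d ?c J (Y \<omega>) \<partial>N)) at_top"
    by (rule filterlim_compose)
  then have "\<forall>\<^sub>F x in at_top.
      (\<integral>\<omega>. lower_test d ?c J (Y \<omega>) \<partial>N) - \<epsilon> < scaled_mean (lower_test d ?c J) (x / ?c)"
    by (rule order_tendstoD) (use assms in simp)
  then show ?thesis
    using eventually_gt_at_top[of 0]
  proof eventually_elim
    case (elim x)
    then show ?case
      using conditional_quiet_ge_lower_test[OF assms(1) elim(2) assms(2), of ?c]
        tail_mean_lower_test_ge[OF assms(2), of J] assms(2)
      by linarith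
  qed
qed

lemma tail_quiet_right_continuous:
  assumes "0 < \<epsilon>"
  shows "\<exists>d>0. measure N (tail_quiet (1 + d) J) < measure N (tail_quiet 1 J) + \<epsilon>"
proof -
  define A where "A j = tail_quiet (1 + inverse (real (Suc j))) J" for j
  have "decseq A"
    unfolding A_def tail_quiet_def decseq_Suc_iff
    by (auto intro: order_trans[OF _ add_left_mono[OF le_imp_inverse_le]])
  moreover have "(\<Inter>j. A j) = tail_quiet 1 J"
  proof (intro equalityI subsetI)
    fix \<omega> assume \<omega>: "\<omega> \<in> (\<Inter>j. A j)"
    have "nrm (Y \<omega> k) \<le> 1" if "k \<in> J" for k
    proof (rule field_le_epsilon)
      fix e :: real assume "0 < e"
      then obtain j where "inverse (real (Suc j)) < e"
        using reals_Archimedean by blast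
      moreover have "nrm (Y \<omega> k) \<le> 1 + inverse (real (Suc j))"
        using \<omega> that unfolding A_def tail_quiet_def by blast
      ultimately show "nrm (Y \<omega> k) \<le> 1 + e" by linarith
    qed
    then show "\<omega> \<in> tail_quiet 1 J"
      using \<omega> unfolding A_def tail_quiet_def by blast
  qed (auto simp: A_def tail_quiet_def intro: order_trans)
  moreover have "range A \<subseteq> sets N"
    unfolding A_def by auto
  ultimately have "(\<lambda>j. measure N (A j)) \<longlonglongrightarrow> measure N (tail_quiet 1 J)"
    using N.finite_Lim_measure_decseq by metis
  then have "\<forall>\<^sub>F j in sequentially. measure N (A j) < measure N (tail_quiet 1 J) + \<epsilon>"
    by (rule order_tendstoD) (use assms in simp)
  then obtain j where "measure N (A j) < measure N (tail_quiet 1 J) + \<epsilon>"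
    by (auto simp: eventually_sequentially)
  then show ?thesis
    unfolding A_def by (intro exI[of _ "inverse (real (Suc j))"]) simp
qed

lemma measure_norm_Y0_gt_near_1:
  assumes "0 < \<epsilon>"
  shows "\<exists>d>0. 1 - \<epsilon> < measure N {\<omega>\<in>space N. 1 + 3 * d < nrm (Y \<omega> 0)}"
proof -
  have "(\<lambda>j. (1 + 3 * inverse (real (Suc j)) + inverse (real (Suc j))) powr (-\<alpha>))
      \<longlonglongrightarrow> (1 + 3 * 0 + 0) powr (-\<alpha>)"
    by (intro tendsto_intros LIMSEQ_inverse_real_of_nat) simp
  then have "\<forall>\<^sub>F j in sequentially. 1 - \<epsilon> < (1 + 3 * inverse (real (Suc j)) + inverse (real (Suc j))) powr (-\<alpha>)"
    by (rule order_tendstoD) (use assms in simp)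
  then obtain j where "1 - \<epsilon> < (1 + 3 * inverse (real (Suc j)) + inverse (real (Suc j))) powr (-\<alpha>)"
    by (auto simp: eventually_sequentially)
  moreover have "(1 + 3 * inverse (real (Suc j)) + inverse (real (Suc j))) powr (-\<alpha>)
      \<le> measure N {\<omega>\<in>space N. 1 + 3 * inverse (real (Suc j)) < nrm (Y \<omega> 0)}"
    by (rule measure_norm_Y0_gt_ge) simp_all
  ultimately show ?thesis
    by (intro exI[of _ "inverse (real (Suc j))"]) simp
qed

lemma conditional_quiet_tendsto:
  assumes "finite J"
  shows "((\<lambda>x. measure M (quiet x J) / measure M (exceedance x)) \<longlongrightarrow> measure N (tail_quiet 1 J)) at_top"
proof (rule order_tendstoI)
  fix a assume "measure N (tail_quiet 1 J) < a"
  define e where "e = (a - measure N (tail_quiet 1 J)) / 2"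
  have "0 < e" using \<open>measure N (tail_quiet 1 J) < a\<close> by (simp add: e_def)
  then obtain d where "0 < d"
    and d_close: "measure N (tail_quiet (1 + d) J) < measure N (tail_quiet 1 J) + e"
    using tail_quiet_right_continuous by blast
  have "\<forall>\<^sub>F x in at_top.
      measure M (quiet x J) / measure M (exceedance x) \<le> measure N (tail_quiet (1 + d) J) + e"
    by (rule eventually_conditional_quiet_le[OF assms \<open>0 < d\<close> \<open>0 < e\<close>])
  then show "\<forall>\<^sub>F x in at_top. measure M (quiet x J) / measure M (exceedance x) < a"
    by eventually_elim (use d_close e_def in argo)
next
  fix a assume "a < measure N (tail_quiet 1 J)"
  define e where "e = (measure N (tail_quiet 1 J) - a) / 2"
  have "0 < e" using \<open>a < measure N (tail_quiet 1 J)\<close> by (simp add: e_def)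
  then obtain d where "0 < d" and d_close: "1 - e < measure N {\<omega>\<in>space N. 1 + 3 * d < nrm (Y \<omega> 0)}"
    using measure_norm_Y0_gt_near_1 by blast
  have "\<forall>\<^sub>F x in at_top. measure N (tail_quiet 1 J) + measure N {\<omega>\<in>space N. 1 + 3 * d < nrm (Y \<omega> 0)} - 1 - e
      \<le> measure M (quiet x J) / measure M (exceedance x)"
    by (rule eventually_conditional_quiet_ge[OF assms \<open>0 < d\<close> \<open>0 < e\<close>])
  then show "\<forall>\<^sub>F x in at_top. a < measure M (quiet x J) / measure M (exceedance x)"
    by eventually_elim (use d_close e_def in argo)
qed

lemma tail_quiet_past_tendsto_theta: "(\<lambda>l. measure N (tail_quiet 1 {- int l..-1})) \<longlonglongrightarrow> theta_tail nrm N Y"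
proof -
  have "(\<lambda>l. measure N (tail_quiet 1 {- int l..-1})) \<longlonglongrightarrow> measure N (\<Inter>l. tail_quiet 1 {- int l..-1})"
    by (intro N.finite_Lim_measure_decseq) (auto simp: decseq_def tail_quiet_def)
  moreover have "(\<Inter>l. tail_quiet 1 {- int l..-1}) = {\<omega>\<in>space N. \<forall>j::int. j \<le> -1 \<longrightarrow> nrm (Y \<omega> j) \<le> 1}"
  proof (intro equalityI subsetI)
    fix \<omega> assume "\<omega> \<in> (\<Inter>l. tail_quiet 1 {- int l..-1})"
    then have "\<omega> \<in> tail_quiet 1 {j..-1}" if "j \<le> -1" for j
      using that by (metis INT_iff UNIV_I int_nat_eq minus_minus neg_0_le_iff_le order.trans zero_le_one
          add_increasing2 le_minus_iff)
    then show "\<omega> \<in> {\<omega>\<in>space N. \<forall>j::int. j \<le> -1 \<longrightarrow> nrm (Y \<omega> j) \<le> 1}"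
      by (auto simp: tail_quiet_def)
  qed (auto simp: tail_quiet_def)
  ultimately show ?thesis
    unfolding theta_tail_def by simp
qed

end

section \<open>Anticlustering and block moments\<close>

locale anticlustering_blocks = tail_series nrm M X N Y \<alpha>
  for nrm :: "real ^ 'd \<Rightarrow> real" and M :: "'a measure" and X :: "'a \<Rightarrow> int \<Rightarrow> real ^ 'd"
    and N :: "'b measure" and Y :: "'b \<Rightarrow> int \<Rightarrow> real ^ 'd" and \<alpha> :: real +
  fixes u :: "nat \<Rightarrow> real" and r :: "nat \<Rightarrow> nat"
  assumes threshold_lim: "filterlim u at_top sequentially"
    and block_length_lim: "filterlim r at_top sequentially"
    and anticlustering: "AC_cond nrm M X r u"
begin

definition quiet_ratio :: "(nat \<Rightarrow> int set) \<Rightarrow> nat \<Rightarrow> nat \<Rightarrow> real" where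
  "quiet_ratio J n m = measure M (quiet (u n) (J m)) / measure M (exceedance (u n))"

lemma quiet_ratio_bounds: "0 \<le> quiet_ratio J n m" "quiet_ratio J n m \<le> 1"
  unfolding quiet_ratio_def
  using measure_quiet_le_exceedance measure_exceedance_pos by (simp_all add: divide_le_eq_1)

lemma theta_tail_bounds: "0 \<le> theta_tail nrm N Y" "theta_tail nrm N Y \<le> 1"
  unfolding theta_tail_def by simp_all

lemma quiet_ratio_theta_dist: "\<bar>quiet_ratio J n m - theta_tail nrm N Y\<bar> \<le> 1"
  using quiet_ratio_bounds[of J n m] theta_tail_bounds by (simp add: abs_le_iff)

lemma anticlustering_far_exceedance:
  assumes "0 < \<epsilon>"
  shows "\<exists>l. \<forall>\<^sub>F n in sequentially.
    measure M (far_exceedance (r n) l (u n) \<inter> exceedance (u n)) / measure M (exceedance (u n)) < \<epsilon>"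
proof -
  let ?p = "\<lambda>l n. measure M (far_exceedance (r n) l (u n) \<inter> exceedance (u n))
    / measure M (exceedance (u n))"
  have "(\<lambda>l. limsup (\<lambda>n. ereal (?p l n))) \<longlonglongrightarrow> 0"
    using anticlustering unfolding AC_cond_def cond_prob_def exceedance_def far_exceedance_def
    by (auto dest!: spec[of _ 1])
  then have "\<forall>\<^sub>F l in sequentially. limsup (\<lambda>n. ereal (?p l n)) < ereal \<epsilon>"
    by (rule order_tendstoD) (use assms in simp)
  then obtain l where "limsup (\<lambda>n. ereal (?p l n)) < ereal \<epsilon>"
    by (auto simp: eventually_sequentially)
  then have "\<forall>\<^sub>F n in sequentially. ereal (?p l n) < ereal \<epsilon>"
    by (rule Limsup_lessD)
  then show ?thesis
    by auto
qed

lemma lag_cauchy_quiet_ratio: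
  assumes mono: "\<And>l m. l \<le> m \<Longrightarrow> J l \<subseteq> J m"
    and far: "\<And>l m j. l \<le> m \<Longrightarrow> j \<in> J m - J l \<Longrightarrow> int l \<le> \<bar>j\<bar> \<and> \<bar>j\<bar> \<le> int m"
  shows "lag_cauchy (quiet_ratio J) r"
  unfolding lag_cauchy_def
proof (intro allI impI)
  fix \<epsilon> :: real assume "0 < \<epsilon>"
  then obtain l where "\<forall>\<^sub>F n in sequentially.
      measure M (far_exceedance (r n) l (u n) \<inter> exceedance (u n)) / measure M (exceedance (u n)) < \<epsilon>"
    using anticlustering_far_exceedance by blast
  then have "\<forall>\<^sub>F n in sequentially. \<forall>m. l \<le> m \<longrightarrow> m < r n \<longrightarrow> \<bar>quiet_ratio J n m - quiet_ratio J n l\<bar> \<le> \<epsilon>"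
  proof (rule eventually_mono, intro allI impI)
    fix n m assume small: "measure M (far_exceedance (r n) l (u n) \<inter> exceedance (u n))
        / measure M (exceedance (u n)) < \<epsilon>" and m: "l \<le> m" "m < r n"
    have "measure M (quiet (u n) (J l)) - measure M (quiet (u n) (J m))
        \<le> measure M (far_exceedance (r n) l (u n) \<inter> exceedance (u n))"
      using m far[OF m(1)] by (intro measure_quiet_diff_le_far mono) force+
    moreover have "measure M (quiet (u n) (J m)) \<le> measure M (quiet (u n) (J l))"
      using quiet_antimono[OF mono[OF m(1)]] by (simp add: M.finite_measure_mono)
    ultimately have "\<bar>quiet_ratio J n m - quiet_ratio J n l\<bar>
        \<le> measure M (far_exceedance (r n) l (u n) \<inter> exceedance (u n)) / measure M (exceedance (u n))"
      using measure_exceedance_pos[of "u n"] unfolding quiet_ratio_def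
      by (simp add: abs_le_iff divide_right_mono diff_divide_distrib[symmetric])
    with small show "\<bar>quiet_ratio J n m - quiet_ratio J n l\<bar> \<le> \<epsilon>"
      by argo
  qed
  then show "\<exists>l. \<forall>\<^sub>F n in sequentially. \<forall>m. l \<le> m \<longrightarrow> m < r n \<longrightarrow> \<bar>quiet_ratio J n m - quiet_ratio J n l\<bar> \<le> \<epsilon>"
    by blast
qed

lemma lag_uniform_limit_past:
  "lag_uniform_limit (quiet_ratio (\<lambda>m. {- int m..-1})) r (theta_tail nrm N Y)"
proof (rule lag_uniform_limitI)
  show "lag_cauchy (quiet_ratio (\<lambda>m. {- int m..-1})) r"
    by (rule lag_cauchy_quiet_ratio) auto
  show "(\<lambda>n. quiet_ratio (\<lambda>m. {- int m..-1}) n l) \<longlonglongrightarrow> measure N (tail_quiet 1 {- int l..-1})" for l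
    unfolding quiet_ratio_def
      by (rule filterlim_compose[OF conditional_quiet_tendsto threshold_lim]) simp
qed (rule tail_quiet_past_tendsto_theta)

lemma block_length_real_lim: "filterlim (\<lambda>n. real (r n)) at_top sequentially"
  using filterlim_compose[OF filterlim_real_sequentially block_length_lim] by simp

lemma average_quiet_ratio_past:
  "(\<lambda>n. (\<Sum>m<r n. quiet_ratio (\<lambda>m. {- int m..-1}) n m) / real (r n)) \<longlonglongrightarrow> theta_tail nrm N Y"
proof -
  have "(\<lambda>n. \<Sum>m<r n. 1 / real (r n) * quiet_ratio (\<lambda>m. {- int m..-1}) n m) \<longlonglongrightarrow> theta_tail nrm N Y * 1"
  proof (rule lag_uniform_limit_weighted_sum[OF lag_uniform_limit_past quiet_ratio_theta_dist])
    show "(\<lambda>n. 1 / real (r n)) \<longlonglongrightarrow> 0"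
      by (rule tendsto_divide_0[OF tendsto_const filterlim_at_top_imp_at_infinity[OF block_length_real_lim]])
    have "\<forall>\<^sub>F n in sequentially. 0 < r n"
      using block_length_lim unfolding filterlim_at_top by (metis (mono_tags) Suc_le_eq eventually_mono)
    then have "\<forall>\<^sub>F n in sequentially. (\<Sum>m<r n. 1 / real (r n)) = 1"
      by eventually_elim simp
    then show "(\<lambda>n. \<Sum>m<r n. 1 / real (r n)) \<longlonglongrightarrow> 1"
      by (rule tendsto_eventually)
  qed auto
  then show ?thesis
    by (simp add: sum_divide_distrib)
qed

text \<open>The future ratios have no pointwise limit short of the time-change formula; instead their
  averages coincide with those of the past ratios.\<close>

lemma lag_uniform_limit_future:
  "lag_uniform_limit (quiet_ratio (\<lambda>m. {1..int m})) r (theta_tail nrm N Y)"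
proof (rule lag_uniform_limit_of_average[OF block_length_lim])
  show "lag_cauchy (quiet_ratio (\<lambda>m. {1..int m})) r"
    by (rule lag_cauchy_quiet_ratio) auto
  show "\<bar>quiet_ratio (\<lambda>m. {1..int m}) n m\<bar> \<le> 1" for n m
    using quiet_ratio_bounds by simp
  have "(\<Sum>m<r n. quiet_ratio (\<lambda>m. {1..int m}) n m) = (\<Sum>m<r n. quiet_ratio (\<lambda>m. {- int m..-1}) n m)" for n
    unfolding quiet_ratio_def
      by (simp add: sum_divide_distrib[symmetric] sum_measure_quiet_past_eq_future)
  then show "(\<lambda>n. (\<Sum>m<r n. quiet_ratio (\<lambda>m. {1..int m}) n m) / real (r n)) \<longlonglongrightarrow> theta_tail nrm N Y"
    using average_quiet_ratio_past by simp
qed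

lemma first_exceedance_moment_tendsto:
  fixes f :: "nat \<Rightarrow> int \<Rightarrow> real"
  assumes "\<And>n m. m < r n \<Longrightarrow> 0 \<le> f n (int m + 1) \<and> f n (int m + 1) \<le> real (r n) powr \<gamma>"
    and "(\<lambda>n. (\<Sum>m<r n. f n (int m + 1)) / real (r n) powr (\<gamma> + 1)) \<longlonglongrightarrow> S"
  shows "(\<lambda>n. (\<integral>\<omega>. indicator (A1 nrm M X (r n) (u n)) \<omega> * f n (t_first nrm X (r n) (u n) \<omega>) \<partial>M)
      / (real (r n) powr (\<gamma> + 1) * measure M (exceedance (u n)))) \<longlonglongrightarrow> theta_tail nrm N Y * S"
proof -
  have "(\<lambda>n. (\<Sum>m<r n. f n (int m + 1) * quiet_ratio (\<lambda>m. {- int m..-1}) n m) / real (r n) powr (\<gamma> + 1))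
      \<longlonglongrightarrow> theta_tail nrm N Y * S"
    by (rule lag_uniform_limit_normalized_sum[OF lag_uniform_limit_past
        quiet_ratio_theta_dist block_length_lim assms])
  then show ?thesis
    unfolding integral_first_exceedance quiet_ratio_def
    by (simp add: sum_divide_distrib[symmetric] divide_divide_eq_left ac_simps)
qed

lemma last_exceedance_moment_tendsto:
  fixes f :: "nat \<Rightarrow> int \<Rightarrow> real"
  assumes "\<And>n m. m < r n \<Longrightarrow> 0 \<le> f n (int (r n) - int m) \<and> f n (int (r n) - int m) \<le> real (r n) powr \<gamma>"
    and "(\<lambda>n. (\<Sum>m<r n. f n (int (r n) - int m)) / real (r n) powr (\<gamma> + 1)) \<longlonglongrightarrow> S"
  shows "(\<lambda>n. (\<integral>\<omega>. indicator (A1 nrm M X (r n) (u n)) \<omega> * f n (t_last nrm X (r n) (u n) \<omega>) \<partial>M)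
      / (real (r n) powr (\<gamma> + 1) * measure M (exceedance (u n)))) \<longlonglongrightarrow> theta_tail nrm N Y * S"
proof -
  have "(\<lambda>n. (\<Sum>m<r n. f n (int (r n) - int m) * quiet_ratio (\<lambda>m. {1..int m}) n m) / real (r n) powr (\<gamma> + 1))
      \<longlonglongrightarrow> theta_tail nrm N Y * S"
    by (rule lag_uniform_limit_normalized_sum[OF lag_uniform_limit_future
        quiet_ratio_theta_dist block_length_lim assms])
  then show ?thesis
    unfolding integral_last_exceedance quiet_ratio_def
    by (simp add: sum_divide_distrib[symmetric] divide_divide_eq_left ac_simps)
qed

lemma first_exceedance_powr_moments:
  assumes "0 < \<gamma>"
  shows "(\<lambda>n. (\<integral>\<omega>. indicator (A1 nrm M X (r n) (u n)) \<omega>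
        * real_of_int (t_first nrm X (r n) (u n) \<omega>) powr \<gamma> \<partial>M)
      / (real (r n) powr (\<gamma> + 1) * measure M (exceedance (u n)))) \<longlonglongrightarrow> theta_tail nrm N Y / (\<gamma> + 1)"
      (is ?time)
    and "(\<lambda>n. (\<integral>\<omega>. indicator (A1 nrm M X (r n) (u n)) \<omega>
        * (real (r n) - real_of_int (t_first nrm X (r n) (u n) \<omega>)) powr \<gamma> \<partial>M)
      / (real (r n) powr (\<gamma> + 1) * measure M (exceedance (u n)))) \<longlonglongrightarrow> theta_tail nrm N Y / (\<gamma> + 1)"
      (is ?remaining)
proof -
  have "(\<lambda>n. (\<Sum>m<r n. real (m + 1) powr \<gamma>) / real (r n) powr (\<gamma> + 1)) \<longlonglongrightarrow> 1 / (\<gamma> + 1)"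
    by (rule filterlim_compose[OF sum_powr_Suc_asymp[OF assms] block_length_lim])
  with first_exceedance_moment_tendsto[of "\<lambda>n i. real_of_int i powr \<gamma>" \<gamma> "1 / (\<gamma> + 1)"]
  show ?time
    using assms by (simp add: add.commute powr_mono2)
  have "(\<Sum>m<r n. (real (r n) - real_of_int (int m + 1)) powr \<gamma>) = (\<Sum>m<r n. real m powr \<gamma>)" for n
    by (subst sum.nat_diff_reindex[symmetric]) (auto intro!: sum.cong simp: of_nat_diff)
  moreover have "(\<lambda>n. (\<Sum>m<r n. real m powr \<gamma>) / real (r n) powr (\<gamma> + 1)) \<longlonglongrightarrow> 1 / (\<gamma> + 1)"
    by (rule filterlim_compose[OF sum_powr_asymp[OF assms] block_length_lim])
  ultimately show ?remaining
    using first_exceedance_moment_tendsto[of "\<lambda>n i. (real (r n) - real_of_int i) powr \<gamma>" \<gamma>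
        "1 / (\<gamma> + 1)"] assms
    by (simp add: powr_mono2)
qed

lemma last_exceedance_powr_moments:
  assumes "0 < \<gamma>"
  shows "(\<lambda>n. (\<integral>\<omega>. indicator (A1 nrm M X (r n) (u n)) \<omega>
        * real_of_int (t_last nrm X (r n) (u n) \<omega>) powr \<gamma> \<partial>M)
      / (real (r n) powr (\<gamma> + 1) * measure M (exceedance (u n)))) \<longlonglongrightarrow> theta_tail nrm N Y / (\<gamma> + 1)"
      (is ?time)
    and "(\<lambda>n. (\<integral>\<omega>. indicator (A1 nrm M X (r n) (u n)) \<omega>
        * (real (r n) - real_of_int (t_last nrm X (r n) (u n) \<omega>)) powr \<gamma> \<partial>M)
      / (real (r n) powr (\<gamma> + 1) * measure M (exceedance (u n)))) \<longlonglongrightarrow> theta_tail nrm N Y / (\<gamma> + 1)"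
      (is ?remaining)
proof -
  have "(\<Sum>m<r n. real_of_int (int (r n) - int m) powr \<gamma>) = (\<Sum>m<r n. real (m + 1) powr \<gamma>)" for n
    by (subst sum.nat_diff_reindex[symmetric]) (auto intro!: sum.cong simp: of_nat_diff)
  moreover have "(\<lambda>n. (\<Sum>m<r n. real (m + 1) powr \<gamma>) / real (r n) powr (\<gamma> + 1)) \<longlonglongrightarrow> 1 / (\<gamma> + 1)"
    by (rule filterlim_compose[OF sum_powr_Suc_asymp[OF assms] block_length_lim])
  ultimately show ?time
    using last_exceedance_moment_tendsto[of "\<lambda>n i. real_of_int i powr \<gamma>" \<gamma> "1 / (\<gamma> + 1)"] assms
    by (simp add: powr_mono2)
  have "(\<lambda>n. (\<Sum>m<r n. real m powr \<gamma>) / real (r n) powr (\<gamma> + 1)) \<longlonglongrightarrow> 1 / (\<gamma> + 1)"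
    by (rule filterlim_compose[OF sum_powr_asymp[OF assms] block_length_lim])
  with last_exceedance_moment_tendsto[of "\<lambda>n i. (real (r n) - real_of_int i) powr \<gamma>" \<gamma>
      "1 / (\<gamma> + 1)"]
  show ?remaining
    using assms by (simp add: powr_mono2)
qed

end

theorem corollary3p3:
  fixes nrm :: "real ^ 'd \<Rightarrow> real"
    and M :: "'a measure" and X :: "'a \<Rightarrow> int \<Rightarrow> real ^ 'd"
    and N :: "'b measure" and Y :: "'b \<Rightarrow> int \<Rightarrow> real ^ 'd"
    and u :: "nat \<Rightarrow> real" and r :: "nat \<Rightarrow> nat" and \<gamma> :: real
  defines "w \<equiv> (\<lambda>n. measure M {\<omega>\<in>space M. nrm (X \<omega> 0) > u n})"
  assumes "is_norm nrm"
    and "random_series M X"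
    and "strictly_stationary M X"
    and "regularly_varying_series nrm M X"
    and "is_tail_process nrm M X N Y"
    and "\<forall>n. u n > 0" and "\<forall>n. r n \<ge> 1"
    and "filterlim u at_top sequentially"
    and "filterlim r at_top sequentially"
    and "filterlim (\<lambda>n. real n * w n) at_top sequentially"
    and "(\<lambda>n. real (r n) / real n) \<longlonglongrightarrow> 0"
    and "(\<lambda>n. real (r n) * w n) \<longlonglongrightarrow> 0"
    and "AC_cond nrm M X r u"
    and "\<gamma> > 0"
  shows "((\<lambda>n. (\<integral>\<omega>. indicator (A1 nrm M X (r n) (u n)) \<omega>
                 * real_of_int (t_first nrm X (r n) (u n) \<omega>) powr \<gamma> \<partial>M)
             / (real (r n) powr (\<gamma> + 1) * w n))
           \<longlonglongrightarrow> theta_tail nrm N Y / (\<gamma> + 1)) \<and>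
    ((\<lambda>n. (\<integral>\<omega>. indicator (A1 nrm M X (r n) (u n)) \<omega>
                 * (real (r n) - real_of_int (t_first nrm X (r n) (u n) \<omega>)) powr \<gamma> \<partial>M)
             / (real (r n) powr (\<gamma> + 1) * w n))
           \<longlonglongrightarrow> theta_tail nrm N Y / (\<gamma> + 1)) \<and>
    ((\<lambda>n. (\<integral>\<omega>. indicator (A1 nrm M X (r n) (u n)) \<omega>
                 * real_of_int (t_last nrm X (r n) (u n) \<omega>) powr \<gamma> \<partial>M)
             / (real (r n) powr (\<gamma> + 1) * w n))
           \<longlonglongrightarrow> theta_tail nrm N Y / (\<gamma> + 1)) \<and>
    ((\<lambda>n. (\<integral>\<omega>. indicator (A1 nrm M X (r n) (u n)) \<omega>
                 * (real (r n) - real_of_int (t_last nrm X (r n) (u n) \<omega>)) powr \<gamma> \<partial>M)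
             / (real (r n) powr (\<gamma> + 1) * w n))
           \<longlonglongrightarrow> theta_tail nrm N Y / (\<gamma> + 1))"
proof -
  obtain \<alpha> where "\<forall>y>0. ((\<lambda>x. measure M {\<omega>\<in>space M. nrm (X \<omega> 0) > x * y}
                  / measure M {\<omega>\<in>space M. nrm (X \<omega> 0) > x}) \<longlongrightarrow> y powr (-\<alpha>)) at_top"
    using assms(5) unfolding regularly_varying_series_def by blast
  moreover have "\<And>x. 0 < measure M {\<omega>\<in>space M. x < nrm (X \<omega> 0)}"
    using assms(5) unfolding regularly_varying_series_def by blast
  ultimately interpret anticlustering_blocks nrm M X N Y \<alpha> u r
    using assms by unfold_locales auto
  have "w = (\<lambda>n. measure M (exceedance (u n)))"
    unfolding w_def exceedance_def by simp
  then show ?thesis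
    using first_exceedance_powr_moments last_exceedance_powr_moments \<open>0 < \<gamma>\<close> by simp
qed

end
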